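(* Let $\gamma$ be an $n\times m$ integer matrix satisfying conditions (i) and (ii), and let $S^\pm=\{g\in\mathbb{Z}^m\mid \mathcal{A}(\gamma)^\pm_g\neq0\}$ be the graded support of $\mathcal{A}(\gamma)^\pm$. Regarding $\gamma$ as the $\mathbb{Z}$-linear map $\mathbb{Z}^m\to\mathbb{Z}^n$, we have $\gamma(S^+)\subseteq\{-1,0,1\}^p\times\mathbb{Z}^q$ and $\gamma(S^-)\subseteq\mathbb{Z}^p\times\{-1,0,1\}^q$.
   Context: $\Bbbk$ is an algebraically closed field of characteristic $0$. Fix $p,q\ge0$, $n=p+q$, a sign $\pm$, $\mp=-\pm$; $p(i)=0$ for $i\le p$, $p(i)=1$ for $i>p$. $\lambda_{ij}=\mp(-1)^{p(i)p(j)}$; $R=R^\pm_{p|q}=\Bbbk[u_1,\dots,u_n]/(u_i^2-u_i\mid\lambda_{ii}=-1)$; $\tau_i\in\mathrm{Aut}(R)$ with $\tau_i(u_i)=\lambda_{ii}(u_i-1)$, $\tau_i(u_j)=u_j$ ($j\ne i$). TGW algebras: for a TGW datum $(R,\sigma,t)$ (commuting automorphisms $\sigma_i$, central $t_i$) and nonzero scalars $\mu_{ij}$ ($i\ne j$), $\mathcal{A}_\mu(R,\sigma,t)$ is the quotient of the $R$-ring generated by $X_i,Y_i$ with relations $X_ir=\sigma_i(r)X_i$, $Y_ir=\sigma_i^{-1}(r)Y_i$, $Y_iX_i=t_i$, $X_iY_i=\sigma_i(t_i)$, $X_iY_j=\mu_{ij}Y_jX_i$ ($i\ne j$), graded by $\deg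 X_i=\mathbf{e}_i=-\deg Y_i$, $\deg R=0$, by the largest graded ideal meeting the degree-zero part trivially. The family $\mathcal{A}(\gamma)^\pm$: $\gamma=(\gamma_{ji})$ is an $n\times m$ integer matrix with (i) $|\gamma_{ji}|\le1$ whenever $\lambda_{jj}=-1$, and (ii) for all $i\ne i'$, either $\gamma_{ki}\gamma_{ki'}<0$ for some $k$ with $\lambda_{kk}=-1$, or $\gamma_{ki}\gamma_{ki'}\le0$ for all $k$. Then $\mathcal{A}(\gamma)^\pm=\mathcal{A}_\mu(R,\sigma,t)$ with index set $\{1,\dots,m\}$, $\sigma_i=\tau_1^{\gamma_{1i}}\cdots\tau_n^{\gamma_{ni}}$, $t_i=\prod_{j=1}^nu_{ji}$ with $u_{ji}=(u_j+\gamma_{ji}-1)\cdots(u_j+1)u_j$ if $\gamma_{ji}>0$, $1$ if $\gamma_{ji}=0$, $(u_j-|\gamma_{ji}|)\cdots(u_j-1)$ if $\gamma_{ji}<0$; and $\mu_{ij}=(\mp1)^{p'(i)p'(j)}(-1)^{\bar p(i)\bar p(j)}$ with $\bar p(i)=\sum_k\gamma_{ki}p(k)\bmod2$, $p'(i)=\sum_k\gamma_{ki}\bmod2$. *)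

theory Defs
  imports "HOL-Library.Poly_Mapping" "HOL-Computational_Algebra.Polynomial"
begin

text \<open>Generators of the free algebra: U j (the polynomial variable u_j of R),
  X i and Y i.  Indices j range over 1..n, i over 1..m.\<close>
datatype letter = U nat | X nat | Y nat

datatype 'a word = Word "'a list"

fun word_list :: "'a word \<Rightarrow> 'a list" where "word_list (Word xs) = xs"

instantiation word :: (type) monoid_add
begin
definition zero_word :: "'a word" where "zero_word = Word []"
definition plus_word :: "'a word \<Rightarrow> 'a word \<Rightarrow> 'a word" where
  "plus_word v w = Word (word_list v @ word_list w)"
instance
proof
  fix a b c :: "'a word"
  show "a + b + c = a + (b + c)" by (cases a; cases b; cases c) (simp add: plus_word_def)
  show "0 + a = a" by (cases a) (simp add: plus_word_def zero_word_def)
  show "a + 0 = a" by (cases a) (simp add: plus_word_def zero_word_def)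
qed
end

text \<open>The free associative \<Bbbk>-algebra on the letters: finitely supported
  functions from words to \<Bbbk>, with convolution product.\<close>
type_synonym 'k free_alg = "letter word \<Rightarrow>\<^sub>0 'k"

definition const :: "'k::ring_1 \<Rightarrow> 'k free_alg" where
  "const c = Poly_Mapping.single 0 c"

definition lt :: "letter \<Rightarrow> 'k::ring_1 free_alg" where
  "lt l = Poly_Mapping.single (Word [l]) 1"

definition valid_letter :: "nat \<Rightarrow> nat \<Rightarrow> letter \<Rightarrow> bool" where
  "valid_letter n m l = (case l of U j \<Rightarrow> 1 \<le> j \<and> j \<le> n
                                | X i \<Rightarrow> 1 \<le> i \<and> i \<le> m
                                | Y i \<Rightarrow> 1 \<le> i \<and> i \<le> m)"

definition Fset :: "nat \<Rightarrow> nat \<Rightarrow> ('k::ring_1) free_alg set" where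
  "Fset n m = {a. \<forall>w\<in>Poly_Mapping.keys a. \<forall>l\<in>set (word_list w). valid_letter n m l}"

text \<open>Elements of the free algebra on U 1..U n only (lifts of elements of R).\<close>
definition Rfree :: "nat \<Rightarrow> ('k::ring_1) free_alg set" where
  "Rfree n = {a. \<forall>w\<in>Poly_Mapping.keys a. \<forall>l\<in>set (word_list w). \<exists>j. l = U j \<and> 1 \<le> j \<and> j \<le> n}"

fun ldeg :: "letter \<Rightarrow> nat \<Rightarrow> int" where
  "ldeg (U j) = (\<lambda>k. 0)"
| "ldeg (X i) = (\<lambda>k. if k = i then 1 else 0)"
| "ldeg (Y i) = (\<lambda>k. if k = i then -1 else 0)"

definition wdeg :: "letter word \<Rightarrow> nat \<Rightarrow> int" where
  "wdeg w = (\<lambda>k. \<Sum>l\<leftarrow>word_list w. ldeg l k)"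

definition homog :: "(nat \<Rightarrow> int) \<Rightarrow> ('k::ring_1) free_alg \<Rightarrow> bool" where
  "homog g a = (\<forall>w\<in>Poly_Mapping.keys a. wdeg w = g)"

definition component :: "(nat \<Rightarrow> int) \<Rightarrow> ('k::ring_1) free_alg \<Rightarrow> 'k free_alg" where
  "component g a = (\<Sum>w\<in>{w\<in>Poly_Mapping.keys a. wdeg w = g}. Poly_Mapping.single w (Poly_Mapping.lookup a w))"

definition is_ideal :: "nat \<Rightarrow> nat \<Rightarrow> ('k::ring_1) free_alg set \<Rightarrow> bool" where
  "is_ideal n m K = (K \<subseteq> Fset n m \<and> 0 \<in> K \<and> (\<forall>a\<in>K. \<forall>b\<in>K. a + b \<in> K) \<and>
      (\<forall>a\<in>K. \<forall>x\<in>Fset n m. x * a \<in> K \<and> a * x \<in> K))"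

definition graded :: "('k::ring_1) free_alg set \<Rightarrow> bool" where
  "graded K = (\<forall>a\<in>K. \<forall>g. component g a \<in> K)"

inductive_set ideal_gen :: "nat \<Rightarrow> nat \<Rightarrow> ('k::ring_1) free_alg set \<Rightarrow> 'k free_alg set"
  for n m S where
  gen: "a \<in> S \<Longrightarrow> a \<in> ideal_gen n m S"
| zero: "0 \<in> ideal_gen n m S"
| add: "a \<in> ideal_gen n m S \<Longrightarrow> b \<in> ideal_gen n m S \<Longrightarrow> a + b \<in> ideal_gen n m S"
| mult: "a \<in> ideal_gen n m S \<Longrightarrow> x \<in> Fset n m \<Longrightarrow> y \<in> Fset n m \<Longrightarrow> x * a * y \<in> ideal_gen n m S"

definition wsubst :: "(letter \<Rightarrow> ('k::ring_1) free_alg) \<Rightarrow> letter word \<Rightarrow> 'k free_alg" where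
  "wsubst f w = prod_list (map f (word_list w))"

definition subst :: "(letter \<Rightarrow> ('k::ring_1) free_alg) \<Rightarrow> 'k free_alg \<Rightarrow> 'k free_alg" where
  "subst f a = (\<Sum>w\<in>Poly_Mapping.keys a. const (Poly_Mapping.lookup a w) * wsubst f w)"

text \<open>Parity p(i): 0 for i \<le> p, 1 for i > p.  The sign \<plusminus> is eps \<in> {1,-1}, \<mp> = -eps.\<close>
definition par :: "nat \<Rightarrow> nat \<Rightarrow> nat" where
  "par p i = (if i \<le> p then 0 else 1)"

definition lam :: "nat \<Rightarrow> int \<Rightarrow> nat \<Rightarrow> nat \<Rightarrow> int" where
  "lam p eps i j = (- eps) * (-1) ^ (par p i * par p j)"

text \<open>tau_j: u_j \<mapsto> lambda_jj (u_j - 1), other generators fixed; and its inverse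
  u_j \<mapsto> lambda_jj u_j + 1 (since lambda_jj^2 = 1).\<close>
definition tau :: "nat \<Rightarrow> int \<Rightarrow> nat \<Rightarrow> letter \<Rightarrow> ('k::ring_1) free_alg" where
  "tau p eps j l = (if l = U j then const (of_int (lam p eps j j)) * (lt (U j) - 1) else lt l)"

definition tau_inv :: "nat \<Rightarrow> int \<Rightarrow> nat \<Rightarrow> letter \<Rightarrow> ('k::ring_1) free_alg" where
  "tau_inv p eps j l = (if l = U j then const (of_int (lam p eps j j)) * lt (U j) + 1 else lt l)"

definition tau_pow :: "nat \<Rightarrow> int \<Rightarrow> nat \<Rightarrow> int \<Rightarrow> ('k::ring_1) free_alg \<Rightarrow> 'k free_alg" where
  "tau_pow p eps j k = (if 0 \<le> k then subst (tau p eps j) ^^ nat k else subst (tau_inv p eps j) ^^ nat (- k))"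

definition sigma :: "nat \<Rightarrow> nat \<Rightarrow> int \<Rightarrow> (nat \<Rightarrow> nat \<Rightarrow> int) \<Rightarrow> nat \<Rightarrow> ('k::ring_1) free_alg \<Rightarrow> 'k free_alg" where
  "sigma p q eps \<gamma> i = foldr (\<lambda>j f. tau_pow p eps j (\<gamma> j i) \<circ> f) [1..<p+q+1] id"

definition sigma_inv :: "nat \<Rightarrow> nat \<Rightarrow> int \<Rightarrow> (nat \<Rightarrow> nat \<Rightarrow> int) \<Rightarrow> nat \<Rightarrow> ('k::ring_1) free_alg \<Rightarrow> 'k free_alg" where
  "sigma_inv p q eps \<gamma> i = foldr (\<lambda>j f. tau_pow p eps j (- \<gamma> j i) \<circ> f) [1..<p+q+1] id"

definition u_fac :: "(nat \<Rightarrow> nat \<Rightarrow> int) \<Rightarrow> nat \<Rightarrow> nat \<Rightarrow> ('k::ring_1) free_alg" where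
  "u_fac \<gamma> j i =
     (if \<gamma> j i > 0 then prod_list (map (\<lambda>k. lt (U j) + of_nat k) [0..<nat (\<gamma> j i)])
      else if \<gamma> j i = 0 then 1
      else prod_list (map (\<lambda>k. lt (U j) - of_nat k) [1..<nat (- \<gamma> j i) + 1]))"

definition tt :: "nat \<Rightarrow> (nat \<Rightarrow> nat \<Rightarrow> int) \<Rightarrow> nat \<Rightarrow> ('k::ring_1) free_alg" where
  "tt n \<gamma> i = prod_list (map (\<lambda>j. u_fac \<gamma> j i) [1..<n+1])"

definition pbar :: "nat \<Rightarrow> nat \<Rightarrow> (nat \<Rightarrow> nat \<Rightarrow> int) \<Rightarrow> nat \<Rightarrow> nat" where
  "pbar p n \<gamma> i = nat ((\<Sum>k=1..n. \<gamma> k i * int (par p k)) mod 2)"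

definition pprime :: "nat \<Rightarrow> (nat \<Rightarrow> nat \<Rightarrow> int) \<Rightarrow> nat \<Rightarrow> nat" where
  "pprime n \<gamma> i = nat ((\<Sum>k=1..n. \<gamma> k i) mod 2)"

definition mu :: "nat \<Rightarrow> nat \<Rightarrow> int \<Rightarrow> (nat \<Rightarrow> nat \<Rightarrow> int) \<Rightarrow> nat \<Rightarrow> nat \<Rightarrow> int" where
  "mu p n eps \<gamma> i j = (- eps) ^ (pprime n \<gamma> i * pprime n \<gamma> j) * (-1) ^ (pbar p n \<gamma> i * pbar p n \<gamma> j)"

text \<open>Defining relations of the ring C (the R-ring generated by X_i, Y_i), written
  inside the free algebra: the relations of R (commutativity, u_j^2 = u_j when
  lambda_jj = -1) and the TGW relations.\<close>
definition rels :: "nat \<Rightarrow> nat \<Rightarrow> nat \<Rightarrow> int \<Rightarrow> (nat \<Rightarrow> nat \<Rightarrow> int) \<Rightarrow> ('k::ring_1) free_alg set" where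
  "rels p q m eps \<gamma> =
     {lt (U a) * lt (U b) - lt (U b) * lt (U a) | a b. 1 \<le> a \<and> a \<le> p+q \<and> 1 \<le> b \<and> b \<le> p+q}
   \<union> {lt (U j) * lt (U j) - lt (U j) | j. 1 \<le> j \<and> j \<le> p+q \<and> lam p eps j j = -1}
   \<union> {lt (X i) * r - sigma p q eps \<gamma> i r * lt (X i) | i r. 1 \<le> i \<and> i \<le> m \<and> r \<in> Rfree (p+q)}
   \<union> {lt (Y i) * r - sigma_inv p q eps \<gamma> i r * lt (Y i) | i r. 1 \<le> i \<and> i \<le> m \<and> r \<in> Rfree (p+q)}
   \<union> {lt (Y i) * lt (X i) - tt (p+q) \<gamma> i | i. 1 \<le> i \<and> i \<le> m}
   \<union> {lt (X i) * lt (Y i) - sigma p q eps \<gamma> i (tt (p+q) \<gamma> i) | i. 1 \<le> i \<and> i \<le> m}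
   \<union> {lt (X i) * lt (Y j) - const (of_int (mu p (p+q) eps \<gamma> i j)) * lt (Y j) * lt (X i)
        | i j. 1 \<le> i \<and> i \<le> m \<and> 1 \<le> j \<and> j \<le> m \<and> i \<noteq> j}"

text \<open>The ideal J of the free algebra with C = F / J.\<close>
definition Jrel :: "nat \<Rightarrow> nat \<Rightarrow> nat \<Rightarrow> int \<Rightarrow> (nat \<Rightarrow> nat \<Rightarrow> int) \<Rightarrow> ('k::ring_1) free_alg set" where
  "Jrel p q m eps \<gamma> = ideal_gen (p+q) m (rels p q m eps \<gamma>)"

text \<open>Preimage in F of the largest graded ideal I of C with I \<inter> C_0 = 0: the sum
  (= ideal generated by the union) of all graded ideals K of F containing J with
  K \<inter> F_0 \<subseteq> J.\<close>
definition Imax :: "nat \<Rightarrow> nat \<Rightarrow> nat \<Rightarrow> int \<Rightarrow> (nat \<Rightarrow> nat \<Rightarrow> int) \<Rightarrow> ('k::ring_1) free_alg set" where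
  "Imax p q m eps \<gamma> = ideal_gen (p+q) m
     (\<Union>{K. is_ideal (p+q) m K \<and> graded K \<and> Jrel p q m eps \<gamma> \<subseteq> K \<and>
           (\<forall>a\<in>K. homog (\<lambda>k. 0) a \<longrightarrow> a \<in> Jrel p q m eps \<gamma>)})"

text \<open>Graded support of A(gamma)^\<plusminus> = C / I: all g with A_g \<noteq> 0, i.e. some
  homogeneous element of degree g in F not in the preimage of I.\<close>
definition tgw_support :: "('k::ring_1) itself \<Rightarrow> nat \<Rightarrow> nat \<Rightarrow> nat \<Rightarrow> int \<Rightarrow> (nat \<Rightarrow> nat \<Rightarrow> int) \<Rightarrow> (nat \<Rightarrow> int) set" where
  "tgw_support (_::'k itself) p q m eps \<gamma> =
     {g. \<exists>a::'k free_alg. a \<in> Fset (p+q) m \<and> homog g a \<and> a \<notin> Imax p q m eps \<gamma>}"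

definition gamma_ok :: "nat \<Rightarrow> nat \<Rightarrow> nat \<Rightarrow> int \<Rightarrow> (nat \<Rightarrow> nat \<Rightarrow> int) \<Rightarrow> bool" where
  "gamma_ok p q m eps \<gamma> =
    ((\<forall>j i. 1 \<le> j \<and> j \<le> p+q \<and> 1 \<le> i \<and> i \<le> m \<and> lam p eps j j = -1 \<longrightarrow> \<bar>\<gamma> j i\<bar> \<le> 1) \<and>
     (\<forall>i i'. 1 \<le> i \<and> i \<le> m \<and> 1 \<le> i' \<and> i' \<le> m \<and> i \<noteq> i' \<longrightarrow>
        (\<exists>k. 1 \<le> k \<and> k \<le> p+q \<and> lam p eps k k = -1 \<and> \<gamma> k i * \<gamma> k i' < 0) \<or>
        (\<forall>k. 1 \<le> k \<and> k \<le> p+q \<longrightarrow> \<gamma> k i * \<gamma> k i' \<le> 0)))"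

end

theory Submission
  imports Defs
begin

text \<open>
  Let \<open>\<lambda>\<^sub>k\<^sub>k = -1\<close>, which for the sign \<open>\<plusminus>\<close> means \<open>k \<le> p\<close> resp. \<open>k > p\<close>. Then \<open>u\<^sub>k\<close> is an
  idempotent of R and, by condition (i), every \<open>\<sigma>\<^sub>i\<close> fixes it or exchanges it with \<open>1 - u\<^sub>k\<close>.
  Reading a word in the generators from the left, \<open>X\<^sub>i\<close> raises a level by \<open>\<gamma>\<^sub>k\<^sub>i\<close> and \<open>Y\<^sub>i\<close>
  lowers it by \<open>\<gamma>\<^sub>k\<^sub>i\<close>; moving the idempotent \<open>e\<^sub>L\<close> (\<open>1 - u\<^sub>k\<close> or \<open>u\<^sub>k\<close> according to the
  parity of L) through a word shifts L by the level of the word.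

  For a word of degree zero, \<open>e\<^sub>L\<^sub>+\<^sub>1\<close> annihilates the word modulo the defining relations
  whenever its level path crosses the edge between L and L + 1. This is shown by deleting letters
  \<open>u\<^sub>c\<close> and, after swaps that are legitimate by condition (ii), adjacent pairs \<open>X\<^sub>i Y\<^sub>i\<close> or
  \<open>Y\<^sub>i X\<^sub>i\<close>; such a pair equals an element of R containing the factor \<open>u\<^sub>k\<close> or \<open>u\<^sub>k - 1\<close>,
  which is killed by the idempotent of the edge the pair crosses. If the path crosses two
  adjacent edges, the complementary idempotents \<open>e\<^sub>L\<^sub>+\<^sub>1\<close> and \<open>e\<^sub>L\<^sub>+\<^sub>2\<close> both kill the word, so
  it vanishes. Consequently the relations together with all words having a subword of level at
  least 2 in absolute value span a graded ideal that meets degree 0 only in the relations; it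
  vanishes in \<open>\<A>(\<gamma>)\<^sup>\<plusminus>\<close>. A homogeneous element of degree g has level \<open>\<Sum>\<^sub>i \<gamma>\<^sub>k\<^sub>i g\<^sub>i\<close>.
\<close>

lemma Word_word_list [simp]: "Word (word_list w) = w"
  by (cases w) simp

definition wmon :: "letter list \<Rightarrow> ('k::ring_1) free_alg" where
  "wmon xs = Poly_Mapping.single (Word xs) 1"

lemma wmon_append: "wmon (xs @ ys) = (wmon xs * wmon ys :: ('k::ring_1) free_alg)"
  by (simp add: wmon_def mult_single plus_word_def)

lemma wmon_Nil [simp]: "wmon [] = 1"
  by (simp add: wmon_def flip: zero_word_def)

lemma lt_eq_wmon: "lt x = wmon [x]"
  by (simp add: lt_def wmon_def)

lemma wmon_Cons: "wmon (x # xs) = (lt x * wmon xs :: ('k::ring_1) free_alg)"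
  using wmon_append[of "[x]" xs] by (simp add: lt_eq_wmon)

lemma keys_wmon: "Poly_Mapping.keys (wmon xs :: ('k::ring_1) free_alg) = {Word xs}"
  by (simp add: wmon_def)

lemma const_0 [simp]: "const 0 = 0" by (simp add: const_def)
lemma const_1 [simp]: "const 1 = 1" by (simp add: const_def)
lemma const_add: "const (a + b) = const a + const b" by (simp add: const_def single_add)
lemma const_uminus: "const (- a) = - const a" by (simp add: const_def single_uminus)
lemma const_mult: "const (a * b) = const a * (const b :: ('k::ring_1) free_alg)"
  by (simp add: const_def mult_single)

lemma const_mult_single: "const c * Poly_Mapping.single w d = Poly_Mapping.single w (c * d :: 'k::ring_1)"
  by (simp add: const_def mult_single)

lemma single_mult_const: "Poly_Mapping.single w d * const c = Poly_Mapping.single w (d * c :: 'k::ring_1)"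
  by (simp add: const_def mult_single)

lemma free_alg_single_expansion:
  "(a :: ('k::ring_1) free_alg) = (\<Sum>w\<in>Poly_Mapping.keys a. Poly_Mapping.single w (Poly_Mapping.lookup a w))"
proof (rule poly_mapping_eqI)
  fix v
  have "(\<Sum>w\<in>Poly_Mapping.keys a. Poly_Mapping.lookup a w when w = v) = Poly_Mapping.lookup a v"
    by (simp add: when_def sum.delta in_keys_iff)
  then show "Poly_Mapping.lookup a v
      = Poly_Mapping.lookup (\<Sum>w\<in>Poly_Mapping.keys a. Poly_Mapping.single w (Poly_Mapping.lookup a w)) v"
    by (simp add: lookup_sum lookup_single)
qed

lemma free_alg_expansion:
  "(a :: ('k::ring_1) free_alg) = (\<Sum>w\<in>Poly_Mapping.keys a. const (Poly_Mapping.lookup a w) * wmon (word_list w))"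
  by (subst free_alg_single_expansion) (simp add: wmon_def const_mult_single)

lemma const_mult_commute: "const c * x = x * (const c :: ('k::comm_ring_1) free_alg)"
  by (subst (1 2) free_alg_single_expansion)
     (simp add: sum_distrib_left sum_distrib_right const_mult_single single_mult_const mult.commute)

lemma mult_const_left_commute: "x * (const c * y) = const c * (x * (y :: ('k::comm_ring_1) free_alg))"
  by (metis mult.assoc const_mult_commute)

definition letter_alg :: "(letter \<Rightarrow> bool) \<Rightarrow> ('k::ring_1) free_alg set" where
  "letter_alg Q = {a. \<forall>w\<in>Poly_Mapping.keys a. \<forall>l\<in>set (word_list w). Q l}"

lemma Fset_eq_letter_alg: "Fset n m = letter_alg (valid_letter n m)"
  by (simp add: Fset_def letter_alg_def)

lemma Rfree_eq_letter_alg: "Rfree n = letter_alg (\<lambda>l. \<exists>j. l = U j \<and> 1 \<le> j \<and> j \<le> n)"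
  by (simp add: Rfree_def letter_alg_def)

context
  fixes Q :: "letter \<Rightarrow> bool"
begin

lemma letter_alg_zero: "0 \<in> letter_alg Q"
  by (simp add: letter_alg_def)

lemma letter_alg_add: "a \<in> letter_alg Q \<Longrightarrow> b \<in> letter_alg Q \<Longrightarrow> a + b \<in> letter_alg Q"
  using keys_add[of a b] by (auto simp: letter_alg_def)

lemma letter_alg_uminus: "a \<in> letter_alg Q \<Longrightarrow> - a \<in> letter_alg Q"
  by (auto simp: letter_alg_def)

lemma letter_alg_diff: "a \<in> letter_alg Q \<Longrightarrow> b \<in> letter_alg Q \<Longrightarrow> a - b \<in> letter_alg Q"
  using letter_alg_add[of a "- b"] letter_alg_uminus[of b] by simp

lemma letter_alg_mult: "a \<in> letter_alg Q \<Longrightarrow> b \<in> letter_alg Q \<Longrightarrow> a * b \<in> letter_alg Q"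
  using keys_mult[of a b] by (fastforce simp: letter_alg_def plus_word_def)

lemma letter_alg_const: "const c \<in> letter_alg Q"
  by (simp add: letter_alg_def const_def zero_word_def)

lemma letter_alg_one: "1 \<in> letter_alg Q"
  using letter_alg_const[of 1] by simp

lemma letter_alg_wmon: "\<forall>l\<in>set xs. Q l \<Longrightarrow> wmon xs \<in> letter_alg Q"
  by (simp add: letter_alg_def keys_wmon)

lemma letter_alg_lt: "Q l \<Longrightarrow> lt l \<in> letter_alg Q"
  by (simp add: lt_eq_wmon letter_alg_wmon)

lemma letter_alg_sum: "(\<And>i. i \<in> I \<Longrightarrow> f i \<in> letter_alg Q) \<Longrightarrow> sum f I \<in> letter_alg Q"
  by (induction I rule: infinite_finite_induct) (auto intro: letter_alg_add letter_alg_zero)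

lemma letter_alg_prod_list: "(\<And>x. x \<in> set xs \<Longrightarrow> x \<in> letter_alg Q) \<Longrightarrow> prod_list xs \<in> letter_alg Q"
  by (induction xs) (auto intro: letter_alg_mult letter_alg_one)

lemma letter_alg_of_nat: "of_nat k \<in> letter_alg Q"
  by (induction k) (auto intro: letter_alg_add letter_alg_one letter_alg_zero)

lemma letter_alg_keys_subset:
  "a \<in> letter_alg Q \<Longrightarrow> Poly_Mapping.keys b \<subseteq> Poly_Mapping.keys a \<Longrightarrow> b \<in> letter_alg Q"
  by (auto simp: letter_alg_def)

end

lemma letter_alg_mono: "(\<And>l. Q l \<Longrightarrow> Q' l) \<Longrightarrow> a \<in> letter_alg Q \<Longrightarrow> a \<in> letter_alg Q'"
  by (auto simp: letter_alg_def)

lemma Rfree_subset_Fset: "Rfree n \<subseteq> Fset n m"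
  unfolding Rfree_eq_letter_alg Fset_eq_letter_alg
  by (rule subsetI, erule letter_alg_mono[rotated]) (auto simp: valid_letter_def)

context
  fixes n m :: nat and S :: "('k::ring_1) free_alg set"
begin

lemma ideal_gen_subset_Fset:
  assumes "S \<subseteq> Fset n m" shows "a \<in> ideal_gen n m S \<Longrightarrow> a \<in> Fset n m"
proof (induction rule: ideal_gen.induct)
  case (mult a x y) then show ?case unfolding Fset_eq_letter_alg by (intro letter_alg_mult)
qed (use assms in \<open>auto simp: Fset_eq_letter_alg intro: letter_alg_add letter_alg_zero\<close>)

lemma ideal_gen_mult_left: "a \<in> ideal_gen n m S \<Longrightarrow> x \<in> Fset n m \<Longrightarrow> x * a \<in> ideal_gen n m S"
  using ideal_gen.mult[of a n m S x 1] by (simp add: Fset_eq_letter_alg letter_alg_one)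

lemma ideal_gen_mult_right: "a \<in> ideal_gen n m S \<Longrightarrow> y \<in> Fset n m \<Longrightarrow> a * y \<in> ideal_gen n m S"
  using ideal_gen.mult[of a n m S 1 y] by (simp add: Fset_eq_letter_alg letter_alg_one)

lemma ideal_gen_const_mult: "a \<in> ideal_gen n m S \<Longrightarrow> const c * a \<in> ideal_gen n m S"
  by (rule ideal_gen_mult_left) (simp_all add: Fset_eq_letter_alg letter_alg_const)

lemma ideal_gen_uminus: "a \<in> ideal_gen n m S \<Longrightarrow> - a \<in> ideal_gen n m S"
  using ideal_gen_const_mult[of a "-1"] by (simp add: const_uminus)

lemma ideal_gen_sum: "(\<And>i. i \<in> I \<Longrightarrow> f i \<in> ideal_gen n m S) \<Longrightarrow> sum f I \<in> ideal_gen n m S"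
  by (induction I rule: infinite_finite_induct) (auto intro: ideal_gen.add ideal_gen.zero)

end

definition alg_endo :: "(('k::comm_ring_1) free_alg \<Rightarrow> 'k free_alg) \<Rightarrow> bool" where
  "alg_endo h \<longleftrightarrow> (\<forall>a b. h (a + b) = h a + h b) \<and> (\<forall>a b. h (a * b) = h a * h b) \<and> (\<forall>c. h (const c) = const c)"

lemma alg_endo_id: "alg_endo id"
  by (simp add: alg_endo_def)

lemma alg_endo_comp: "alg_endo g \<Longrightarrow> alg_endo h \<Longrightarrow> alg_endo (g \<circ> h)"
  by (simp add: alg_endo_def)

lemma alg_endo_funpow: "alg_endo h \<Longrightarrow> alg_endo (h ^^ k)"
  by (induction k) (auto simp: alg_endo_id alg_endo_comp)

context
  fixes h :: "('k::comm_ring_1) free_alg \<Rightarrow> 'k free_alg"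
  assumes h: "alg_endo h"
begin

lemma alg_endo_add: "h (a + b) = h a + h b"
  using h by (simp add: alg_endo_def)

lemma alg_endo_mult: "h (a * b) = h a * h b"
  using h by (simp add: alg_endo_def)

lemma alg_endo_one: "h 1 = 1"
  using h const_1 by (metis alg_endo_def)

lemma alg_endo_diff: "h (a - b) = h a - h b"
  using alg_endo_add[of "a - b" b] by (simp add: algebra_simps)

end

lemma subst_superset:
  assumes "finite S" "Poly_Mapping.keys a \<subseteq> S"
  shows "subst f a = (\<Sum>w\<in>S. const (Poly_Mapping.lookup a w) * wsubst f w)"
  unfolding subst_def
  by (rule sum.mono_neutral_left) (use assms in \<open>auto simp: in_keys_iff\<close>)

lemma subst_zero [simp]: "subst f 0 = 0"
  by (simp add: subst_def)

lemma subst_add: "subst f (a + b) = subst f a + subst f (b :: ('k::comm_ring_1) free_alg)"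
proof -
  let ?S = "Poly_Mapping.keys a \<union> Poly_Mapping.keys b"
  have "subst f (a + b) = (\<Sum>w\<in>?S. const (Poly_Mapping.lookup (a + b) w) * wsubst f w)"
    by (rule subst_superset) (use keys_add[of a b] in auto)
  also have "\<dots> = (\<Sum>w\<in>?S. const (Poly_Mapping.lookup a w) * wsubst f w)
                + (\<Sum>w\<in>?S. const (Poly_Mapping.lookup b w) * wsubst f w)"
    by (simp add: lookup_add const_add distrib_right sum.distrib)
  also have "\<dots> = subst f a + subst f b"
    using subst_superset[of ?S a f] subst_superset[of ?S b f] by simp
  finally show ?thesis .
qed

lemma subst_sum: "subst f (sum g I) = (\<Sum>i\<in>I. subst f (g i :: ('k::comm_ring_1) free_alg))"
  by (induction I rule: infinite_finite_induct) (auto simp: subst_add)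

lemma subst_single:
  "subst f (Poly_Mapping.single w c) = (const c * wsubst f w :: ('k::comm_ring_1) free_alg)"
  by (simp add: subst_def)

lemma subst_mult_single:
  "subst f (Poly_Mapping.single v c * Poly_Mapping.single w d)
     = subst f (Poly_Mapping.single v c) * subst f (Poly_Mapping.single w (d :: 'k::comm_ring_1))"
proof -
  have "subst f (Poly_Mapping.single v c * Poly_Mapping.single w d) = const c * (const d * wsubst f v) * wsubst f w"
    by (simp add: mult_single subst_single wsubst_def plus_word_def const_mult mult.assoc)
  also have "\<dots> = subst f (Poly_Mapping.single v c) * subst f (Poly_Mapping.single w d)"
    unfolding subst_single by (metis const_mult_commute mult.assoc)
  finally show ?thesis .
qed

lemma subst_mult: "subst f (a * b) = subst f a * subst f (b :: ('k::comm_ring_1) free_alg)"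
proof -
  let ?sa = "\<lambda>v. Poly_Mapping.single v (Poly_Mapping.lookup a v)"
  let ?sb = "\<lambda>w. Poly_Mapping.single w (Poly_Mapping.lookup b w)"
  have "subst f (a * b) = subst f ((\<Sum>v\<in>Poly_Mapping.keys a. ?sa v) * (\<Sum>w\<in>Poly_Mapping.keys b. ?sb w))"
    by (simp flip: free_alg_single_expansion)
  also have "\<dots> = (\<Sum>v\<in>Poly_Mapping.keys a. subst f (?sa v)) * (\<Sum>w\<in>Poly_Mapping.keys b. subst f (?sb w))"
    by (simp add: sum_product subst_sum subst_mult_single)
  also have "\<dots> = subst f a * subst f b"
    by (simp flip: subst_sum free_alg_single_expansion)
  finally show ?thesis .
qed

lemma subst_const: "subst f (const c) = (const c :: ('k::comm_ring_1) free_alg)"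
  by (simp add: const_def subst_single wsubst_def zero_word_def)

lemma alg_endo_subst: "alg_endo (subst f :: ('k::comm_ring_1) free_alg \<Rightarrow> _)"
  by (simp add: alg_endo_def subst_add subst_mult subst_const)

lemma subst_lt: "subst f (lt l) = (f l :: ('k::comm_ring_1) free_alg)"
  by (simp add: lt_def subst_single wsubst_def)

lemma subst_letter_alg:
  assumes "\<And>l. Q l \<Longrightarrow> f l \<in> letter_alg Q'" and "a \<in> letter_alg Q"
  shows "subst f a \<in> letter_alg Q'"
  unfolding subst_def wsubst_def
proof (intro letter_alg_sum letter_alg_mult letter_alg_const letter_alg_prod_list)
  fix w x assume "w \<in> Poly_Mapping.keys a" "x \<in> set (map f (word_list w))"
  with assms show "x \<in> letter_alg Q'"
    by (auto simp: letter_alg_def)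
qed

lemma lookup_component:
  "Poly_Mapping.lookup (component g a) w = (if wdeg w = g then Poly_Mapping.lookup a w else (0::'k::ring_1))"
  by (auto simp: component_def lookup_sum lookup_single when_def sum.delta' in_keys_iff)

lemma component_add: "component g (a + b) = component g a + component g (b :: ('k::ring_1) free_alg)"
  by (rule poly_mapping_eqI) (simp add: lookup_component lookup_add)

lemma component_zero [simp]: "component g (0 :: ('k::ring_1) free_alg) = 0"
  by (simp add: component_def)

lemma component_sum: "component g (sum f I) = (\<Sum>i\<in>I. component g (f i :: ('k::ring_1) free_alg))"
  by (induction I rule: infinite_finite_induct) (auto simp: component_add)

lemma keys_component: "Poly_Mapping.keys (component g a) \<subseteq> Poly_Mapping.keys (a :: ('k::ring_1) free_alg)"
  by (auto simp: in_keys_iff lookup_component split: if_splits)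

lemma component_homog: "homog h a \<Longrightarrow> component g a = (if g = h then a else (0 :: ('k::ring_1) free_alg))"
  by (rule poly_mapping_eqI) (auto simp: lookup_component homog_def in_keys_iff)

lemma homog_component: "homog g (component g (a :: ('k::ring_1) free_alg))"
  by (auto simp: homog_def in_keys_iff lookup_component split: if_splits)

lemma free_alg_component_expansion:
  "(a :: ('k::ring_1) free_alg) = (\<Sum>h\<in>wdeg ` Poly_Mapping.keys a. component h a)"
proof (rule poly_mapping_eqI)
  fix w
  show "Poly_Mapping.lookup a w = Poly_Mapping.lookup (\<Sum>h\<in>wdeg ` Poly_Mapping.keys a. component h a) w"
    by (cases "w \<in> Poly_Mapping.keys a") (auto simp: lookup_sum lookup_component sum.delta in_keys_iff)
qed

lemma wdeg_plus: "wdeg (v + w) = (\<lambda>k. wdeg v k + wdeg w k)"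
  by (cases v; cases w) (simp add: wdeg_def plus_word_def)

lemma homog_mult: "homog g a \<Longrightarrow> homog h b \<Longrightarrow> homog (\<lambda>k. g k + h k) (a * (b :: ('k::ring_1) free_alg))"
  using keys_mult[of a b] by (fastforce simp: homog_def wdeg_plus)

lemma homog_add: "homog g a \<Longrightarrow> homog g b \<Longrightarrow> homog g (a + (b :: ('k::ring_1) free_alg))"
  using keys_add[of a b] by (auto simp: homog_def)

lemma homog_diff: "homog g a \<Longrightarrow> homog g b \<Longrightarrow> homog g (a - (b :: ('k::ring_1) free_alg))"
  using homog_add[of g a "- b"] by (simp add: homog_def)

lemma homog_lt: "homog (ldeg l) (lt l :: ('k::ring_1) free_alg)"
  by (simp add: homog_def lt_def wdeg_def)

lemma homog_mult_zero_left: "homog (\<lambda>k. 0) a \<Longrightarrow> homog g b \<Longrightarrow> homog g (a * (b :: ('k::ring_1) free_alg))"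
  using homog_mult[of "\<lambda>k. 0" a g b] by simp

lemma homog_mult_zero_right: "homog g a \<Longrightarrow> homog (\<lambda>k. 0) b \<Longrightarrow> homog g (a * (b :: ('k::ring_1) free_alg))"
  using homog_mult[of g a "\<lambda>k. 0" b] by simp

lemma homog_Y_X: "homog (\<lambda>k. 0) (lt (Y i) * lt (X i) :: ('k::ring_1) free_alg)"
  and homog_X_Y: "homog (\<lambda>k. 0) (lt (X i) * lt (Y i) :: ('k::ring_1) free_alg)"
proof -
  have "(\<lambda>k. ldeg (Y i) k + ldeg (X i) k) = (\<lambda>k. 0)" "(\<lambda>k. ldeg (X i) k + ldeg (Y i) k) = (\<lambda>k. 0)"
    by auto
  then show "homog (\<lambda>k. 0) (lt (Y i) * lt (X i) :: 'k free_alg)" "homog (\<lambda>k. 0) (lt (X i) * lt (Y i) :: 'k free_alg)"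
    using homog_mult[OF homog_lt homog_lt, of "Y i" "X i"] homog_mult[OF homog_lt homog_lt, of "X i" "Y i"]
    by simp_all
qed

lemma homog_const: "homog (\<lambda>k. 0) (const c :: ('k::ring_1) free_alg)"
  by (simp add: homog_def const_def wdeg_def zero_word_def)

lemma homog_Rfree:
  assumes "r \<in> Rfree n" shows "homog (\<lambda>k. 0) (r :: ('k::ring_1) free_alg)"
  unfolding homog_def wdeg_def
proof (intro ballI ext)
  fix w k assume "w \<in> Poly_Mapping.keys r"
  with assms have "\<forall>l\<in>set (word_list w). \<exists>j. l = U j"
    unfolding Rfree_def by blast
  then have "(\<Sum>l\<leftarrow>word_list w. ldeg l k) = (\<Sum>l\<leftarrow>word_list w. 0)"
    by (intro arg_cong[where f=sum_list] map_cong) auto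
  then show "(\<Sum>l\<leftarrow>word_list w. ldeg l k) = 0" by simp
qed

lemma ideal_gen_graded:
  assumes "\<And>s. s \<in> S \<Longrightarrow> \<exists>h. homog h s"
  shows "a \<in> ideal_gen n m S \<Longrightarrow> component g a \<in> ideal_gen n m (S :: ('k::comm_ring_1) free_alg set)"
proof (induction arbitrary: g rule: ideal_gen.induct)
  case (gen a)
  then obtain h where "homog h a" using assms by blast
  then show ?case using gen by (auto simp: component_homog intro: ideal_gen.gen ideal_gen.zero)
next
  case zero then show ?case by (simp add: component_def ideal_gen.zero)
next
  case (add a b) then show ?case by (simp add: component_add ideal_gen.add)
next
  case (mult a x y)
  let ?H = "\<lambda>z :: 'k free_alg. wdeg ` Poly_Mapping.keys z"
  let ?t = "\<lambda>h1 h2 h3. component h1 x * component h2 a * component h3 y"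
  have "x * a * y = (\<Sum>h1\<in>?H x. component h1 x) * (\<Sum>h2\<in>?H a. component h2 a) * (\<Sum>h3\<in>?H y. component h3 y)"
    by (metis free_alg_component_expansion)
  also have "\<dots> = (\<Sum>h1\<in>?H x. \<Sum>h2\<in>?H a. component h1 x * component h2 a) * (\<Sum>h3\<in>?H y. component h3 y)"
    by (simp only: sum_product)
  also have "\<dots> = (\<Sum>h1\<in>?H x. (\<Sum>h2\<in>?H a. component h1 x * component h2 a) * (\<Sum>h3\<in>?H y. component h3 y))"
    by (rule sum_distrib_right)
  also have "\<dots> = (\<Sum>h1\<in>?H x. \<Sum>h2\<in>?H a. \<Sum>h3\<in>?H y. ?t h1 h2 h3)"
    by (simp only: sum_product)
  finally have eq: "component g (x * a * y) = (\<Sum>h1\<in>?H x. \<Sum>h2\<in>?H a. \<Sum>h3\<in>?H y. component g (?t h1 h2 h3))"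
    by (simp add: component_sum)
  have Fset: "component h x \<in> Fset n m" "component h y \<in> Fset n m" for h
    using mult(2,3) letter_alg_keys_subset[OF _ keys_component] unfolding Fset_eq_letter_alg by blast+
  show ?case unfolding eq
  proof (intro ideal_gen_sum)
    fix h1 h2 h3
    have "homog (\<lambda>k. h1 k + h2 k + h3 k) (?t h1 h2 h3)"
      by (rule homog_mult[OF homog_mult[OF homog_component homog_component] homog_component])
    then have "component g (?t h1 h2 h3) = (if g = (\<lambda>k. h1 k + h2 k + h3 k) then ?t h1 h2 h3 else 0)"
      by (rule component_homog)
    moreover have "?t h1 h2 h3 \<in> ideal_gen n m S"
      using mult Fset by (intro ideal_gen.mult) auto
    ultimately show "component g (?t h1 h2 h3) \<in> ideal_gen n m S"
      by (simp add: ideal_gen.zero)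
  qed
qed

lemma Rfree_add: "a \<in> Rfree n \<Longrightarrow> b \<in> Rfree n \<Longrightarrow> a + b \<in> Rfree n"
  unfolding Rfree_eq_letter_alg by (rule letter_alg_add)

lemma Rfree_diff: "a \<in> Rfree n \<Longrightarrow> b \<in> Rfree n \<Longrightarrow> a - b \<in> Rfree n"
  unfolding Rfree_eq_letter_alg by (rule letter_alg_diff)

lemma Rfree_mult: "a \<in> Rfree n \<Longrightarrow> b \<in> Rfree n \<Longrightarrow> a * b \<in> Rfree n"
  unfolding Rfree_eq_letter_alg by (rule letter_alg_mult)

lemma Rfree_const: "const c \<in> Rfree n"
  unfolding Rfree_eq_letter_alg by (rule letter_alg_const)

lemma Rfree_one: "1 \<in> Rfree n"
  unfolding Rfree_eq_letter_alg by (rule letter_alg_one)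

lemma Rfree_of_nat: "of_nat k \<in> Rfree n"
  unfolding Rfree_eq_letter_alg by (rule letter_alg_of_nat)

lemma Rfree_prod_list: "(\<And>x. x \<in> set xs \<Longrightarrow> x \<in> Rfree n) \<Longrightarrow> prod_list xs \<in> Rfree n"
  unfolding Rfree_eq_letter_alg by (rule letter_alg_prod_list)

lemma Rfree_lt: "1 \<le> j \<Longrightarrow> j \<le> n \<Longrightarrow> lt (U j) \<in> Rfree n"
  unfolding Rfree_eq_letter_alg by (rule letter_alg_lt) blast

lemma Rfree_subst:
  "(\<And>j. 1 \<le> j \<Longrightarrow> j \<le> n \<Longrightarrow> f (U j) \<in> Rfree n) \<Longrightarrow> r \<in> Rfree n \<Longrightarrow> subst f r \<in> Rfree n"
  unfolding Rfree_eq_letter_alg by (rule subst_letter_alg) auto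

lemma Fset_add: "a \<in> Fset n m \<Longrightarrow> b \<in> Fset n m \<Longrightarrow> a + b \<in> Fset n m"
  unfolding Fset_eq_letter_alg by (rule letter_alg_add)

lemma Fset_diff: "a \<in> Fset n m \<Longrightarrow> b \<in> Fset n m \<Longrightarrow> a - b \<in> Fset n m"
  unfolding Fset_eq_letter_alg by (rule letter_alg_diff)

lemma Fset_mult: "a \<in> Fset n m \<Longrightarrow> b \<in> Fset n m \<Longrightarrow> a * b \<in> Fset n m"
  unfolding Fset_eq_letter_alg by (rule letter_alg_mult)

lemma Fset_const: "const c \<in> Fset n m"
  unfolding Fset_eq_letter_alg by (rule letter_alg_const)

lemma Fset_wmon: "\<forall>l\<in>set xs. valid_letter n m l \<Longrightarrow> wmon xs \<in> Fset n m"
  unfolding Fset_eq_letter_alg by (rule letter_alg_wmon)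

lemma Fset_lt: "valid_letter n m l \<Longrightarrow> lt l \<in> Fset n m"
  unfolding Fset_eq_letter_alg by (rule letter_alg_lt)

lemma Fset_Rfree: "r \<in> Rfree n \<Longrightarrow> r \<in> Fset n m"
  using Rfree_subset_Fset by blast

lemma funpow_fixpoint: "h x = x \<Longrightarrow> (h ^^ k) x = x"
  by (induction k) auto

lemma funpow_preserves: "(\<And>x. x \<in> A \<Longrightarrow> h x \<in> A) \<Longrightarrow> x \<in> A \<Longrightarrow> (h ^^ k) x \<in> A"
  by (induction k) auto

section \<open>The automorphisms \<open>\<sigma>\<^sub>i\<close>\<close>

locale tgw =
  fixes K :: "('k::comm_ring_1) itself"
    and p q m :: nat and eps :: int and \<gamma> :: "nat \<Rightarrow> nat \<Rightarrow> int"
  assumes eps: "eps = 1 \<or> eps = -1"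
    and gamma_ok: "gamma_ok p q m eps \<gamma>"
begin

abbreviation RF :: "'k free_alg set" where "RF \<equiv> Rfree (p+q)"
abbreviation FS :: "'k free_alg set" where "FS \<equiv> Fset (p+q) m"

text \<open>The indices k with \<open>u\<^sub>k\<^sup>2 = u\<^sub>k\<close> in R.\<close>
definition idem_index :: "nat \<Rightarrow> bool" where
  "idem_index k \<longleftrightarrow> 1 \<le> k \<and> k \<le> p+q \<and> lam p eps k k = -1"

lemma gamma_idem_index_cases:
  "idem_index k \<Longrightarrow> 1 \<le> i \<Longrightarrow> i \<le> m \<Longrightarrow> \<gamma> k i = 0 \<or> \<gamma> k i = 1 \<or> \<gamma> k i = -1"
  using gamma_ok by (fastforce simp: gamma_ok_def idem_index_def)

lemma alg_endo_tau_pow: "alg_endo (tau_pow p eps j e :: 'k free_alg \<Rightarrow> _)"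
  unfolding tau_pow_def by (auto intro: alg_endo_funpow alg_endo_subst)

lemma tau_pow_Rfree: "1 \<le> j \<Longrightarrow> j \<le> p+q \<Longrightarrow> r \<in> RF \<Longrightarrow> tau_pow p eps j e r \<in> RF"
  unfolding tau_pow_def tau_def tau_inv_def
  by (auto intro!: funpow_preserves Rfree_subst Rfree_add Rfree_diff Rfree_mult Rfree_const Rfree_one Rfree_lt)

lemma tau_pow_other: "j \<noteq> k \<Longrightarrow> tau_pow p eps j e (lt (U k)) = (lt (U k) :: 'k free_alg)"
  unfolding tau_pow_def by (auto intro!: funpow_fixpoint simp: subst_lt tau_def tau_inv_def)

lemma tau_pow_idem_index:
  assumes "idem_index k" "e = 0 \<or> e = 1 \<or> e = -1"
  shows "tau_pow p eps k e (lt (U k)) = (if e = 0 then lt (U k) else 1 - lt (U k) :: 'k free_alg)"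
  using assms by (auto simp: tau_pow_def subst_lt tau_def tau_inv_def idem_index_def const_uminus algebra_simps)

lemma alg_endo_tau_pow_fold:
  "alg_endo h \<Longrightarrow> alg_endo (foldr (\<lambda>j f. tau_pow p eps j (e j) \<circ> f) js h :: 'k free_alg \<Rightarrow> _)"
  by (induction js) (simp_all add: alg_endo_comp alg_endo_tau_pow)

lemma tau_pow_fold_Rfree:
  "\<forall>j\<in>set js. 1 \<le> j \<and> j \<le> p+q \<Longrightarrow> r \<in> RF \<Longrightarrow> foldr (\<lambda>j f. tau_pow p eps j (e j) \<circ> f) js id r \<in> RF"
  by (induction js) (auto intro!: tau_pow_Rfree)

lemma tau_pow_fold_idem_index:
  assumes "distinct js" "idem_index k" "e k = 0 \<or> e k = 1 \<or> e k = -1"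
  shows "foldr (\<lambda>j f. tau_pow p eps j (e j) \<circ> f) js id (lt (U k))
       = (if k \<in> set js \<and> e k \<noteq> 0 then 1 - lt (U k) else (lt (U k) :: 'k free_alg))"
  using assms(1)
proof (induction js)
  case (Cons j js)
  show ?case
  proof (cases "j = k")
    case True
    with Cons show ?thesis using tau_pow_idem_index[OF assms(2,3)] by auto
  next
    case False
    with Cons show ?thesis
      by (auto simp: alg_endo_diff[OF alg_endo_tau_pow] alg_endo_one[OF alg_endo_tau_pow] tau_pow_other)
  qed
qed simp

lemma alg_endo_sigma: "alg_endo (sigma p q eps \<gamma> i :: 'k free_alg \<Rightarrow> _)"
  and alg_endo_sigma_inv: "alg_endo (sigma_inv p q eps \<gamma> i :: 'k free_alg \<Rightarrow> _)"
  unfolding sigma_def sigma_inv_def by (rule alg_endo_tau_pow_fold[OF alg_endo_id])+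

lemma sigma_Rfree: "r \<in> RF \<Longrightarrow> sigma p q eps \<gamma> i r \<in> RF"
  and sigma_inv_Rfree: "r \<in> RF \<Longrightarrow> sigma_inv p q eps \<gamma> i r \<in> RF"
  unfolding sigma_def sigma_inv_def by (rule tau_pow_fold_Rfree; auto)+

text \<open>Condition (i) forces \<open>\<gamma>\<^sub>k\<^sub>i \<in> {-1,0,1}\<close>, so \<open>\<sigma>\<^sub>i\<^sup>\<plusminus>\<^sup>1\<close> either fixes the idempotent
  \<open>u\<^sub>k\<close> or exchanges it with \<open>1 - u\<^sub>k\<close>.\<close>
lemma sigma_idem_index:
  "idem_index k \<Longrightarrow> 1 \<le> i \<Longrightarrow> i \<le> m \<Longrightarrow>
   sigma p q eps \<gamma> i (lt (U k)) = (if \<gamma> k i = 0 then lt (U k) else 1 - lt (U k) :: 'k free_alg)"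
  unfolding sigma_def using gamma_idem_index_cases[of k i]
  by (subst tau_pow_fold_idem_index) (auto simp: idem_index_def)

lemma sigma_inv_idem_index:
  "idem_index k \<Longrightarrow> 1 \<le> i \<Longrightarrow> i \<le> m \<Longrightarrow>
   sigma_inv p q eps \<gamma> i (lt (U k)) = (if \<gamma> k i = 0 then lt (U k) else 1 - lt (U k) :: 'k free_alg)"
  unfolding sigma_inv_def using gamma_idem_index_cases[of k i]
  by (subst tau_pow_fold_idem_index) (auto simp: idem_index_def)

abbreviation J :: "'k free_alg set" where "J \<equiv> Jrel p q m eps \<gamma>"

lemma u_fac_Rfree:
  assumes "1 \<le> j" "j \<le> p+q" shows "u_fac \<gamma> j i \<in> RF"
proof -
  have "prod_list (map (\<lambda>k. lt (U j) + of_nat k) ks) \<in> RF"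
       "prod_list (map (\<lambda>k. lt (U j) - of_nat k) ks) \<in> RF" for ks
    using assms by (auto intro!: Rfree_prod_list Rfree_add Rfree_diff Rfree_lt Rfree_of_nat)
  then show ?thesis
    unfolding u_fac_def using Rfree_one by (simp only: split: if_split) blast
qed

lemma tt_Rfree: "tt (p+q) \<gamma> i \<in> RF"
  unfolding tt_def by (rule Rfree_prod_list) (auto intro!: u_fac_Rfree)

lemma rels_subset_Fset: "rels p q m eps \<gamma> \<subseteq> FS"
  unfolding rels_def
  using Fset_Rfree[OF tt_Rfree] Fset_Rfree[OF sigma_Rfree[OF tt_Rfree]]
  by (auto simp: valid_letter_def intro!: Fset_diff Fset_mult Fset_lt Fset_const
      Fset_Rfree[OF sigma_Rfree] Fset_Rfree[OF sigma_inv_Rfree] tt_Rfree dest: Fset_Rfree)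

lemma J_subset_Fset: "J \<subseteq> FS"
  unfolding Jrel_def using ideal_gen_subset_Fset[OF rels_subset_Fset] by blast

lemma J_add: "a \<in> J \<Longrightarrow> b \<in> J \<Longrightarrow> a + b \<in> J"
  unfolding Jrel_def by (rule ideal_gen.add)

lemma J_uminus: "a \<in> J \<Longrightarrow> - a \<in> J"
  unfolding Jrel_def by (rule ideal_gen_uminus)

lemma J_mult_left: "a \<in> J \<Longrightarrow> x \<in> FS \<Longrightarrow> x * a \<in> J"
  unfolding Jrel_def by (rule ideal_gen_mult_left)

lemma J_mult_right: "a \<in> J \<Longrightarrow> x \<in> FS \<Longrightarrow> a * x \<in> J"
  unfolding Jrel_def by (rule ideal_gen_mult_right)

lemma J_const_mult: "a \<in> J \<Longrightarrow> const c * a \<in> J"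
  unfolding Jrel_def by (rule ideal_gen_const_mult)

lemma J_sum: "(\<And>i. i \<in> I \<Longrightarrow> f i \<in> J) \<Longrightarrow> sum f I \<in> J"
  unfolding Jrel_def by (rule ideal_gen_sum)

definition cong_J :: "'k free_alg \<Rightarrow> 'k free_alg \<Rightarrow> bool" (infix "\<approx>" 50) where
  "a \<approx> b \<longleftrightarrow> a - b \<in> J"

lemma cong_J_refl [intro]: "a \<approx> a"
  unfolding cong_J_def Jrel_def by (simp add: ideal_gen.zero)

lemma cong_J_sym: "a \<approx> b \<Longrightarrow> b \<approx> a"
  unfolding cong_J_def using J_uminus by fastforce

lemma cong_J_trans [trans]: "a \<approx> b \<Longrightarrow> b \<approx> c \<Longrightarrow> a \<approx> c"
  unfolding cong_J_def using J_add by fastforce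

lemma cong_J_mult_left: "a \<approx> b \<Longrightarrow> x \<in> FS \<Longrightarrow> x * a \<approx> x * b"
  unfolding cong_J_def using J_mult_left by (fastforce simp: algebra_simps)

lemma cong_J_mult_right: "a \<approx> b \<Longrightarrow> x \<in> FS \<Longrightarrow> a * x \<approx> b * x"
  unfolding cong_J_def using J_mult_right by (fastforce simp: algebra_simps)

lemma cong_J_const_mult: "a \<approx> b \<Longrightarrow> const c * a \<approx> const c * b"
  unfolding cong_J_def using J_const_mult by (fastforce simp: algebra_simps)

lemma cong_J_sum: "(\<And>i. i \<in> I \<Longrightarrow> f i \<approx> g i) \<Longrightarrow> sum f I \<approx> sum g I"
  unfolding cong_J_def Jrel_def by (simp add: ideal_gen_sum flip: sum_subtractf)

lemma cong_J_mem_J: "a \<approx> b \<Longrightarrow> b \<in> J \<Longrightarrow> a \<in> J"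
  unfolding cong_J_def using J_add by fastforce

lemma mem_J_iff_cong_J_0: "a \<in> J \<longleftrightarrow> a \<approx> 0"
  by (simp add: cong_J_def)

lemma rel_U_commute:
  "1 \<le> a \<Longrightarrow> a \<le> p+q \<Longrightarrow> 1 \<le> b \<Longrightarrow> b \<le> p+q \<Longrightarrow> lt (U a) * lt (U b) \<approx> lt (U b) * lt (U a)"
  unfolding cong_J_def Jrel_def by (rule ideal_gen.gen) (auto simp: rels_def)

lemma rel_U_idem: "idem_index j \<Longrightarrow> lt (U j) * lt (U j) \<approx> lt (U j)"
  unfolding cong_J_def Jrel_def by (rule ideal_gen.gen) (auto simp: rels_def idem_index_def)

lemma rel_X_Rfree: "1 \<le> i \<Longrightarrow> i \<le> m \<Longrightarrow> r \<in> RF \<Longrightarrow> lt (X i) * r \<approx> sigma p q eps \<gamma> i r * lt (X i)"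
  unfolding cong_J_def Jrel_def by (rule ideal_gen.gen) (unfold rels_def, blast)

lemma rel_Y_Rfree: "1 \<le> i \<Longrightarrow> i \<le> m \<Longrightarrow> r \<in> RF \<Longrightarrow> lt (Y i) * r \<approx> sigma_inv p q eps \<gamma> i r * lt (Y i)"
  unfolding cong_J_def Jrel_def by (rule ideal_gen.gen) (unfold rels_def, blast)

lemma rel_Y_X: "1 \<le> i \<Longrightarrow> i \<le> m \<Longrightarrow> lt (Y i) * lt (X i) \<approx> tt (p+q) \<gamma> i"
  unfolding cong_J_def Jrel_def by (rule ideal_gen.gen) (unfold rels_def, blast)

lemma rel_X_Y: "1 \<le> i \<Longrightarrow> i \<le> m \<Longrightarrow> lt (X i) * lt (Y i) \<approx> sigma p q eps \<gamma> i (tt (p+q) \<gamma> i)"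
  unfolding cong_J_def Jrel_def by (rule ideal_gen.gen) (unfold rels_def, blast)

lemma rel_X_Y_swap:
  "1 \<le> i \<Longrightarrow> i \<le> m \<Longrightarrow> 1 \<le> j \<Longrightarrow> j \<le> m \<Longrightarrow> i \<noteq> j \<Longrightarrow>
   lt (X i) * lt (Y j) \<approx> const (of_int (mu p (p+q) eps \<gamma> i j)) * lt (Y j) * lt (X i)"
  unfolding cong_J_def Jrel_def by (rule ideal_gen.gen) (unfold rels_def, blast)

lemma mu_square: "mu p (p+q) eps \<gamma> i j * mu p (p+q) eps \<gamma> i j = 1"
proof -
  have "(s ^ a * (-1) ^ b) * (s ^ a * (-1) ^ b) = (s * s) ^ a * ((-1) * (-1)) ^ b" for s :: int and a b
    by (simp add: power_mult_distrib algebra_simps)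
  then show ?thesis
    using eps unfolding mu_def by auto
qed

text \<open>Since \<open>\<mu>\<^sub>i\<^sub>j = \<plusminus>1\<close>, the relation between \<open>X\<^sub>i\<close> and \<open>Y\<^sub>j\<close> can be read in both directions.\<close>
lemma rel_Y_X_swap:
  assumes "1 \<le> i" "i \<le> m" "1 \<le> j" "j \<le> m" "i \<noteq> j"
  shows "lt (Y j) * lt (X i) \<approx> const (of_int (mu p (p+q) eps \<gamma> i j)) * lt (X i) * lt (Y j)"
proof -
  let ?c = "const (of_int (mu p (p+q) eps \<gamma> i j)) :: 'k free_alg"
  have "?c * ?c = 1"
    by (simp only: of_int_mult[symmetric] const_mult[symmetric] mu_square of_int_1 const_1)
  then have "lt (Y j) * lt (X i) = ?c * (?c * lt (Y j) * lt (X i))"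
    by (simp only: mult.assoc[symmetric] mult_1)
  also have "\<dots> \<approx> ?c * (lt (X i) * lt (Y j))"
    using rel_X_Y_swap[OF assms] by (rule cong_J_const_mult[OF cong_J_sym])
  finally show ?thesis by (simp add: mult.assoc)
qed

section \<open>Commutativity of R modulo the relations\<close>

abbreviation valid_word :: "letter list \<Rightarrow> bool" where
  "valid_word xs \<equiv> \<forall>l\<in>set xs. valid_letter (p+q) m l"

abbreviation R_word :: "letter list \<Rightarrow> bool" where
  "R_word xs \<equiv> \<forall>l\<in>set xs. \<exists>j. l = U j \<and> 1 \<le> j \<and> j \<le> p+q"

lemma commute_by_expansion:
  assumes "\<And>w. w \<in> Poly_Mapping.keys r \<Longrightarrow> x * wmon (word_list w) \<approx> wmon (word_list w) * x"
  shows "x * r \<approx> r * x"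
proof -
  let ?c = "\<lambda>w. const (Poly_Mapping.lookup r w)"
  have "x * r = (\<Sum>w\<in>Poly_Mapping.keys r. ?c w * (x * wmon (word_list w)))"
    by (subst free_alg_expansion) (simp add: sum_distrib_left mult_const_left_commute)
  also have "\<dots> \<approx> (\<Sum>w\<in>Poly_Mapping.keys r. ?c w * (wmon (word_list w) * x))"
    using assms by (intro cong_J_sum cong_J_const_mult)
  also have "\<dots> = r * x"
    by (subst (2) free_alg_expansion) (simp add: sum_distrib_right mult.assoc)
  finally show ?thesis .
qed

lemma U_wmon_commute:
  "1 \<le> a \<Longrightarrow> a \<le> p+q \<Longrightarrow> R_word ws \<Longrightarrow> lt (U a) * wmon ws \<approx> wmon ws * lt (U a)"
proof (induction ws)
  case (Cons l ws)
  then obtain b where b: "l = U b" "1 \<le> b" "b \<le> p+q" by auto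
  have "lt (U a) * wmon (l # ws) = (lt (U a) * lt (U b)) * wmon ws"
    by (simp add: wmon_Cons b mult.assoc)
  also have "\<dots> \<approx> (lt (U b) * lt (U a)) * wmon ws"
    using Cons b by (intro cong_J_mult_right rel_U_commute Fset_wmon) (auto simp: valid_letter_def)
  also have "\<dots> = lt (U b) * (lt (U a) * wmon ws)"
    by (simp add: mult.assoc)
  also have "\<dots> \<approx> lt (U b) * (wmon ws * lt (U a))"
    using Cons b by (intro cong_J_mult_left Fset_lt) (auto simp: valid_letter_def)
  also have "\<dots> = wmon (l # ws) * lt (U a)"
    by (simp add: wmon_Cons b mult.assoc)
  finally show ?case .
qed auto

lemma wmon_R_word_commute: "R_word vs \<Longrightarrow> R_word ws \<Longrightarrow> wmon vs * wmon ws \<approx> wmon ws * wmon vs"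
proof (induction vs)
  case (Cons l vs)
  then obtain a where a: "l = U a" "1 \<le> a" "a \<le> p+q" by auto
  have "wmon (l # vs) * wmon ws = lt (U a) * (wmon vs * wmon ws)"
    by (simp add: wmon_Cons a mult.assoc)
  also have "\<dots> \<approx> lt (U a) * (wmon ws * wmon vs)"
    using Cons a by (intro cong_J_mult_left Fset_lt) (simp_all add: valid_letter_def)
  also have "\<dots> = (lt (U a) * wmon ws) * wmon vs"
    by (simp add: mult.assoc)
  also have "\<dots> \<approx> (wmon ws * lt (U a)) * wmon vs"
    using Cons a by (intro cong_J_mult_right U_wmon_commute Fset_wmon) (auto simp: valid_letter_def)
  also have "\<dots> = wmon ws * wmon (l # vs)"
    by (simp add: wmon_Cons a mult.assoc)
  finally show ?case .
qed auto

lemma R_word_of_keys: "r \<in> RF \<Longrightarrow> w \<in> Poly_Mapping.keys r \<Longrightarrow> R_word (word_list w)"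
  by (auto simp: Rfree_def)

lemma Rfree_commute:
  assumes "r \<in> RF" "s \<in> RF" shows "r * s \<approx> s * r"
proof -
  have s_commute: "wmon vs * s \<approx> s * wmon vs" if "R_word vs" for vs
    using that R_word_of_keys[OF assms(2)] by (intro commute_by_expansion[OF wmon_R_word_commute])
  have "s * r \<approx> r * s"
    by (rule commute_by_expansion, rule cong_J_sym, rule s_commute, rule R_word_of_keys[OF assms(1)])
  then show ?thesis
    by (rule cong_J_sym)
qed

lemma lt_Rfree_transport:
  assumes "valid_letter (p+q) m l" "r \<in> RF"
  shows "\<exists>r'\<in>RF. lt l * r \<approx> r' * lt l"
proof (cases l)
  case (U j)
  with assms show ?thesis
    by (intro bexI[of _ r] Rfree_commute) (auto simp: valid_letter_def intro: Rfree_lt)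
next
  case (X i)
  with assms show ?thesis
    using rel_X_Rfree sigma_Rfree by (fastforce simp: valid_letter_def)
next
  case (Y i)
  with assms show ?thesis
    using rel_Y_Rfree sigma_inv_Rfree by (fastforce simp: valid_letter_def)
qed

lemma wmon_Rfree_transport: "valid_word xs \<Longrightarrow> r \<in> RF \<Longrightarrow> \<exists>r'\<in>RF. wmon xs * r \<approx> r' * wmon xs"
proof (induction xs arbitrary: r)
  case (Cons l xs)
  then obtain r1 where r1: "r1 \<in> RF" "wmon xs * r \<approx> r1 * wmon xs" by auto
  obtain r2 where r2: "r2 \<in> RF" "lt l * r1 \<approx> r2 * lt l"
    using lt_Rfree_transport[of l r1] Cons r1 by auto
  have "wmon (l # xs) * r = lt l * (wmon xs * r)" by (simp add: wmon_Cons mult.assoc)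
  also have "\<dots> \<approx> lt l * (r1 * wmon xs)" using Cons r1 by (intro cong_J_mult_left Fset_lt) auto
  also have "\<dots> = (lt l * r1) * wmon xs" by (simp add: mult.assoc)
  also have "\<dots> \<approx> (r2 * lt l) * wmon xs" using Cons r2 by (intro cong_J_mult_right Fset_wmon) auto
  also have "\<dots> = r2 * wmon (l # xs)" by (simp add: wmon_Cons mult.assoc)
  finally show ?case using r2 by blast
qed (auto intro: bexI[of _ r])

end

section \<open>Rearranging words by commuting swaps\<close>

fun isX :: "letter \<Rightarrow> bool" where
  "isX (X i) = True" | "isX _ = False"

fun isY :: "letter \<Rightarrow> bool" where
  "isY (Y i) = True" | "isY _ = False"

fun idx :: "letter \<Rightarrow> nat" where
  "idx (U j) = j" | "idx (X i) = i" | "idx (Y i) = i"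

definition opposite :: "letter \<Rightarrow> letter \<Rightarrow> bool" where
  "opposite x y \<longleftrightarrow> (isX x \<and> isY y) \<or> (isY x \<and> isX y)"

definition matched :: "letter \<Rightarrow> letter \<Rightarrow> bool" where
  "matched x y \<longleftrightarrow> opposite x y \<and> idx x = idx y"

lemma matched_cases:
  "matched x y \<Longrightarrow> (x = X (idx x) \<and> y = Y (idx x)) \<or> (x = Y (idx x) \<and> y = X (idx x))"
  by (cases x; cases y) (auto simp: matched_def opposite_def)

definition degree_zero :: "letter list \<Rightarrow> bool" where
  "degree_zero v \<longleftrightarrow> (\<forall>i. (\<Sum>l\<leftarrow>v. ldeg l i) = 0)"

text \<open>Adjacent letters \<open>X\<^sub>i Y\<^sub>j\<close> or \<open>Y\<^sub>j X\<^sub>i\<close> with \<open>i \<noteq> j\<close> commute up to the scalar \<open>\<mu>\<^sub>i\<^sub>j\<close>.\<close>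
definition commuting_swap :: "letter list \<Rightarrow> letter list \<Rightarrow> bool" where
  "commuting_swap v w \<longleftrightarrow>
     (\<exists>\<alpha> \<beta> x y. v = \<alpha> @ [x, y] @ \<beta> \<and> w = \<alpha> @ [y, x] @ \<beta> \<and> opposite x y \<and> idx x \<noteq> idx y)"

lemma commuting_swap_mset: "commuting_swap v w \<Longrightarrow> mset v = mset w"
  unfolding commuting_swap_def by (elim exE conjE) (simp add: add_mset_commute)

lemma commuting_swaps_mset: "commuting_swap\<^sup>*\<^sup>* v w \<Longrightarrow> mset v = mset w"
  by (induction rule: rtranclp_induct) (auto dest: commuting_swap_mset)

lemma sum_list_map_mset_eq:
  fixes f :: "'a \<Rightarrow> 'b::comm_monoid_add"
  assumes "mset v = mset w" shows "(\<Sum>l\<leftarrow>v. f l) = (\<Sum>l\<leftarrow>w. f l)"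
proof -
  have "mset (map f v) = mset (map f w)"
    using assms by simp
  then show ?thesis
    by (metis sum_mset_sum_list)
qed

lemma commuting_swaps_context:
  "commuting_swap\<^sup>*\<^sup>* u u' \<Longrightarrow> commuting_swap\<^sup>*\<^sup>* (\<alpha> @ u @ \<beta>) (\<alpha> @ u' @ \<beta>)"
proof (induction rule: rtranclp_induct)
  case (step u' u'')
  then obtain \<alpha>' \<beta>' x y where "u' = \<alpha>' @ [x, y] @ \<beta>'" "u'' = \<alpha>' @ [y, x] @ \<beta>'"
    "opposite x y" "idx x \<noteq> idx y"
    unfolding commuting_swap_def by blast
  then have "commuting_swap (\<alpha> @ u' @ \<beta>) (\<alpha> @ u'' @ \<beta>)"
    unfolding commuting_swap_def by (intro exI[of _ "\<alpha> @ \<alpha>'"] exI[of _ "\<beta>' @ \<beta>"]) auto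
  with step.IH show ?case by simp
qed simp

lemma commuting_swap_Cons: "opposite x y \<Longrightarrow> idx x \<noteq> idx y \<Longrightarrow> commuting_swap (x # y # \<beta>) (y # x # \<beta>)"
  unfolding commuting_swap_def by (rule exI[of _ "[]"]) auto

lemma commuting_swaps_pass_right:
  "\<forall>y\<in>set ys. opposite x y \<and> idx x \<noteq> idx y \<Longrightarrow> commuting_swap\<^sup>*\<^sup>* (x # ys) (ys @ [x])"
proof (induction ys)
  case (Cons y ys)
  have "commuting_swap (x # y # ys) (y # x # ys)"
    using Cons.prems by (intro commuting_swap_Cons) auto
  moreover have "commuting_swap\<^sup>*\<^sup>* ([y] @ (x # ys) @ []) ([y] @ (ys @ [x]) @ [])"
    using Cons by (intro commuting_swaps_context) auto
  ultimately show ?case by (simp add: converse_rtranclp_into_rtranclp)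
qed simp

lemma commuting_swaps_pass_left:
  "\<forall>y\<in>set ys. opposite y x \<and> idx y \<noteq> idx x \<Longrightarrow> commuting_swap\<^sup>*\<^sup>* (ys @ [x]) (x # ys)"
proof (induction ys)
  case (Cons y ys)
  have "commuting_swap\<^sup>*\<^sup>* ([y] @ (ys @ [x]) @ []) ([y] @ (x # ys) @ [])"
    using Cons by (intro commuting_swaps_context) auto
  moreover have "commuting_swap (y # x # ys) (x # y # ys)"
    using Cons.prems by (intro commuting_swap_Cons) auto
  ultimately show ?case by (simp add: rtranclp.rtrancl_into_rtrancl)
qed simp

lemma commuting_swaps_partition:
  "\<forall>x\<in>set z. \<forall>y\<in>set z. P x \<and> \<not> P y \<longrightarrow> opposite y x \<and> idx y \<noteq> idx x \<Longrightarrow>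
   commuting_swap\<^sup>*\<^sup>* z (filter P z @ filter (\<lambda>x. \<not> P x) z)"
proof (induction z)
  case (Cons c z)
  have IH: "commuting_swap\<^sup>*\<^sup>* ([c] @ z @ []) ([c] @ (filter P z @ filter (\<lambda>x. \<not> P x) z) @ [])"
    using Cons by (intro commuting_swaps_context) auto
  show ?case
  proof (cases "P c")
    case False
    have "commuting_swap\<^sup>*\<^sup>* ([] @ (c # filter P z) @ filter (\<lambda>x. \<not> P x) z)
                               ([] @ (filter P z @ [c]) @ filter (\<lambda>x. \<not> P x) z)"
      using Cons.prems False by (intro commuting_swaps_context commuting_swaps_pass_right) auto
    with IH False show ?thesis by (auto elim: rtranclp_trans)
  qed (use IH in simp)
qed simp

lemma matched_sym: "matched x y \<Longrightarrow> matched y x"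
  by (auto simp: matched_def opposite_def)

lemma matched_occurrence:
  assumes "x \<in> set v" "y \<in> set v" "matched x y"
  obtains \<alpha> l1 z l2 \<beta> where "v = \<alpha> @ l1 # z @ l2 # \<beta>" "matched l1 l2"
proof -
  have "x \<noteq> y" using assms(3) by (cases x; cases y) (auto simp: matched_def opposite_def)
  obtain v1 v2 where v: "v = v1 @ x # v2" using split_list[OF assms(1)] by blast
  show ?thesis
  proof (cases "y \<in> set v2")
    case True
    then obtain z \<beta> where "v2 = z @ y # \<beta>" using split_list[of y v2] by blast
    then show ?thesis using that[of v1 x z y \<beta>] v assms(3) by auto
  next
    case False
    with assms(2) \<open>x \<noteq> y\<close> v have "y \<in> set v1" by auto
    then obtain \<alpha> z where "v1 = \<alpha> @ y # z" using split_list[of y v1] by blast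
    then show ?thesis using that[of \<alpha> y z x v2] v matched_sym[OF assms(3)] by auto
  qed
qed

lemma matched_pair_inside:
  assumes "\<forall>x\<in>set z. isX x \<or> isY x" "matched l1 l2"
    and "\<not> ((\<forall>w\<in>set z. idx w \<noteq> idx l1) \<and> (\<forall>w1\<in>set z. \<forall>w2\<in>set z. \<not> matched w1 w2))"
  obtains pre u suf x y where "l1 # z @ [l2] = pre @ u @ suf" "length u < length z + 2"
    "x \<in> set u" "y \<in> set u" "matched x y"
proof (cases "\<exists>w\<in>set z. idx w = idx l1")
  case True
  then obtain w where w: "w \<in> set z" "idx w = idx l1" by blast
  then have "matched l1 w \<or> matched w l2"
    using assms(1,2) by (cases l1; cases l2; cases w) (auto simp: matched_def opposite_def)
  then show ?thesis
  proof
    assume "matched l1 w"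
    then show ?thesis using that[of "[]" "l1 # z" "[l2]" l1 w] w(1) by auto
  next
    assume "matched w l2"
    then show ?thesis using that[of "[l1]" "z @ [l2]" "[]" w l2] w(1) by auto
  qed
next
  case False
  with assms(3) obtain w1 w2 where "w1 \<in> set z" "w2 \<in> set z" "matched w1 w2" by blast
  then show ?thesis using that[of "[l1]" z "[l2]" w1 w2] by auto
qed

lemma innermost_matched_pair:
  "\<forall>x\<in>set v. isX x \<or> isY x \<Longrightarrow> x \<in> set v \<Longrightarrow> y \<in> set v \<Longrightarrow> matched x y \<Longrightarrow>
   \<exists>\<alpha> l1 z l2 \<beta>. v = \<alpha> @ l1 # z @ l2 # \<beta> \<and> matched l1 l2 \<and> (\<forall>w\<in>set z. idx w \<noteq> idx l1) \<and>
     (\<forall>w1\<in>set z. \<forall>w2\<in>set z. \<not> matched w1 w2)"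
proof (induction "length v" arbitrary: v x y rule: less_induct)
  case less
  obtain \<alpha> l1 z l2 \<beta> where d: "v = \<alpha> @ l1 # z @ l2 # \<beta>" "matched l1 l2"
    using matched_occurrence[OF less.prems(2-4)] .
  show ?case
  proof (cases "(\<forall>w\<in>set z. idx w \<noteq> idx l1) \<and> (\<forall>w1\<in>set z. \<forall>w2\<in>set z. \<not> matched w1 w2)")
    case True then show ?thesis using d by blast
  next
    case False
    have "\<forall>x\<in>set z. isX x \<or> isY x" using less.prems(1) d by auto
    from matched_pair_inside[OF this d(2) False] obtain pre u suf x' y'
      where u: "l1 # z @ [l2] = pre @ u @ suf" "length u < length z + 2" "x' \<in> set u" "y' \<in> set u"
        "matched x' y'" .
    have v: "v = (\<alpha> @ pre) @ u @ (suf @ \<beta>)"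
      using d(1) u(1) by (metis append.assoc append_Cons append_Nil)
    have "length u < length v"
      using u(2) d(1) by simp
    moreover have "\<forall>x\<in>set u. isX x \<or> isY x"
      using less.prems(1) v by simp
    ultimately obtain \<alpha>' l1' z' l2' \<beta>' where
      "u = \<alpha>' @ l1' # z' @ l2' # \<beta>'" "matched l1' l2'" "\<forall>w\<in>set z'. idx w \<noteq> idx l1'"
      "\<forall>w1\<in>set z'. \<forall>w2\<in>set z'. \<not> matched w1 w2"
      using less.hyps u(3-5) by blast
    then show ?thesis using v
      by (intro exI[of _ "\<alpha> @ pre @ \<alpha>'"] exI[of _ l1'] exI[of _ z'] exI[of _ l2'] exI[of _ "\<beta>' @ suf @ \<beta>"]) auto
  qed
qed

text \<open>Between an innermost matched pair, the letters of the type of \<open>l\<^sub>2\<close> are moved to the left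
  of \<open>l\<^sub>1\<close> and the others to the right of \<open>l\<^sub>2\<close>; all these swaps are commuting swaps.\<close>
lemma commuting_swaps_to_matched_pair:
  assumes "\<forall>x\<in>set v. isX x \<or> isY x" "x \<in> set v" "y \<in> set v" "matched x y"
  obtains \<alpha> l1 l2 \<beta> where "commuting_swap\<^sup>*\<^sup>* v (\<alpha> @ [l1, l2] @ \<beta>)" "matched l1 l2"
proof -
  from innermost_matched_pair[OF assms] obtain \<alpha> l1 z l2 \<beta> where
    d: "v = \<alpha> @ l1 # z @ l2 # \<beta>" "matched l1 l2" "\<forall>w\<in>set z. idx w \<noteq> idx l1"
       "\<forall>w1\<in>set z. \<forall>w2\<in>set z. \<not> matched w1 w2" by blast
  define P where "P = (if isX l1 then isY else isX)"
  define Z1 where "Z1 = filter P z"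
  define Z2 where "Z2 = filter (\<lambda>x. \<not> P x) z"
  have XY: "\<forall>x\<in>set z. isX x \<or> isY x" "isX l1 \<or> isY l1" using assms(1) d(1) by auto
  have notboth: "\<not> (isX w \<and> isY w)" for w by (cases w) auto
  have P_l: "P l2" "\<not> P l1" using d(2) notboth by (auto simp: P_def matched_def opposite_def)
  have idx_l2: "idx l2 = idx l1" using d(2) by (simp add: matched_def)
  have s1: "commuting_swap\<^sup>*\<^sup>* z (Z1 @ Z2)" unfolding Z1_def Z2_def
  proof (rule commuting_swaps_partition, intro ballI impI)
    fix a b assume ab: "a \<in> set z" "b \<in> set z" "P a \<and> \<not> P b"
    then have "opposite b a" using XY notboth by (auto simp: P_def opposite_def split: if_splits)
    moreover have "\<not> matched b a" using d(4) ab by auto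
    ultimately show "opposite b a \<and> idx b \<noteq> idx a" by (auto simp: matched_def)
  qed
  have s2: "commuting_swap\<^sup>*\<^sup>* (l1 # Z1) (Z1 @ [l1])"
    using d(3) XY notboth P_l
    by (intro commuting_swaps_pass_right) (auto simp: Z1_def P_def opposite_def split: if_splits)
  have s3: "commuting_swap\<^sup>*\<^sup>* (Z2 @ [l2]) (l2 # Z2)"
    using d(3) XY notboth P_l idx_l2
    by (intro commuting_swaps_pass_left) (auto simp: Z2_def P_def opposite_def split: if_splits)
  have "commuting_swap\<^sup>*\<^sup>* ((\<alpha> @ [l1]) @ z @ (l2 # \<beta>)) ((\<alpha> @ [l1]) @ (Z1 @ Z2) @ (l2 # \<beta>))"
    by (rule commuting_swaps_context[OF s1])
  moreover have "commuting_swap\<^sup>*\<^sup>* (\<alpha> @ (l1 # Z1) @ (Z2 @ l2 # \<beta>)) (\<alpha> @ (Z1 @ [l1]) @ (Z2 @ l2 # \<beta>))"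
    by (rule commuting_swaps_context[OF s2])
  moreover have "commuting_swap\<^sup>*\<^sup>* ((\<alpha> @ Z1 @ [l1]) @ (Z2 @ [l2]) @ \<beta>) ((\<alpha> @ Z1 @ [l1]) @ (l2 # Z2) @ \<beta>)"
    by (rule commuting_swaps_context[OF s3])
  ultimately have "commuting_swap\<^sup>*\<^sup>* v ((\<alpha> @ Z1) @ [l1, l2] @ (Z2 @ \<beta>))"
    using d(1) by (auto elim!: rtranclp_trans)
  then show ?thesis using d(2) by (rule that)
qed

lemma degree_zero_has_matched_pair:
  assumes "x \<in> set v" "isX x \<or> isY x" "degree_zero v"
  shows "\<exists>y\<in>set v. matched x y"
proof (rule ccontr)
  assume unmatched: "\<not> (\<exists>y\<in>set v. matched x y)"
  define a where "a = idx x"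
  define s where "s = ldeg x a"
  have s: "s = 1 \<or> s = -1" using assms(2) by (cases x) (auto simp: s_def a_def)
  have nonneg: "0 \<le> s * ldeg l a" if "l \<in> set v" for l
  proof -
    have "\<not> matched x l" using that unmatched by blast
    then show ?thesis using assms(2) by (cases x; cases l) (auto simp: s_def a_def matched_def opposite_def)
  qed
  have "s * ldeg x a \<le> (\<Sum>l\<leftarrow>v. s * ldeg l a)"
    using assms(1) nonneg by (intro member_le_sum_list) auto
  also have "\<dots> = s * (\<Sum>l\<leftarrow>v. ldeg l a)"
    by (simp add: sum_list_const_mult)
  finally show False
    using assms(3) s by (auto simp: degree_zero_def s_def)
qed

lemma matched_ldeg: "matched x y \<Longrightarrow> ldeg x i + ldeg y i = 0"
  by (cases x; cases y) (auto simp: matched_def opposite_def)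

lemma degree_zero_matched_reduction:
  assumes XY: "\<forall>x\<in>set v. isX x \<or> isY x" and "v \<noteq> []" and deg: "degree_zero v"
  obtains \<alpha> l1 l2 \<beta> where "commuting_swap\<^sup>*\<^sup>* v (\<alpha> @ [l1, l2] @ \<beta>)" "matched l1 l2"
    "set (\<alpha> @ [l1, l2] @ \<beta>) = set v" "degree_zero (\<alpha> @ \<beta>)" "length (\<alpha> @ \<beta>) < length v"
proof -
  obtain x where "x \<in> set v" using \<open>v \<noteq> []\<close> by (cases v) auto
  then obtain y where "y \<in> set v" "matched x y"
    using degree_zero_has_matched_pair XY deg by blast
  then obtain \<alpha> l1 l2 \<beta> where sw: "commuting_swap\<^sup>*\<^sup>* v (\<alpha> @ [l1, l2] @ \<beta>)" and mt: "matched l1 l2"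
    using commuting_swaps_to_matched_pair[OF XY \<open>x \<in> set v\<close>] by blast
  have mset: "mset v = mset (\<alpha> @ [l1, l2] @ \<beta>)"
    by (rule commuting_swaps_mset[OF sw])
  have "degree_zero (\<alpha> @ \<beta>)"
    unfolding degree_zero_def
  proof
    fix i
    have "(\<Sum>l\<leftarrow>v. ldeg l i) = (\<Sum>l\<leftarrow>\<alpha> @ [l1, l2] @ \<beta>. ldeg l i)"
      by (rule sum_list_map_mset_eq[OF mset])
    then show "(\<Sum>l\<leftarrow>\<alpha> @ \<beta>. ldeg l i) = 0"
      using deg matched_ldeg[OF mt, of i] by (simp add: degree_zero_def)
  qed
  moreover have "set (\<alpha> @ [l1, l2] @ \<beta>) = set v"
    by (metis mset set_mset_mset)
  moreover have "length (\<alpha> @ \<beta>) < length v"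
    using arg_cong[where f = size, OF mset] by simp
  ultimately show ?thesis
    using that sw mt by blast
qed

context tgw
begin

section \<open>Levels, crossings and parity idempotents\<close>

definition step :: "nat \<Rightarrow> letter \<Rightarrow> int" where
  "step k l = (case l of U j \<Rightarrow> 0 | X i \<Rightarrow> \<gamma> k i | Y i \<Rightarrow> - \<gamma> k i)"

lemma step_simps [simp]: "step k (U j) = 0" "step k (X i) = \<gamma> k i" "step k (Y i) = - \<gamma> k i"
  by (simp_all add: step_def)

definition level :: "nat \<Rightarrow> letter list \<Rightarrow> int" where
  "level k xs = (\<Sum>l\<leftarrow>xs. step k l)"

lemma level_simps [simp]:
  "level k [] = 0" "level k (x # xs) = step k x + level k xs" "level k (xs @ ys) = level k xs + level k ys"
  by (simp_all add: level_def)

text \<open>Reading a word from the left, the level moves by \<open>step k\<close>; \<open>crossings k A xs\<close> collects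
  the L such that the walk started at A passes between L and L + 1.\<close>
fun crossings :: "nat \<Rightarrow> int \<Rightarrow> letter list \<Rightarrow> int set" where
  "crossings k A [] = {}"
| "crossings k A (x # xs) =
     (if step k x = 0 then {} else {min A (A + step k x)}) \<union> crossings k (A + step k x) xs"

lemma crossings_append: "crossings k A (xs @ ys) = crossings k A xs \<union> crossings k (A + level k xs) ys"
  by (induction xs arbitrary: A) (auto simp: add.assoc)

lemma step_idem_index_cases:
  "idem_index k \<Longrightarrow> valid_letter (p+q) m l \<Longrightarrow> step k l = 0 \<or> step k l = 1 \<or> step k l = -1"
  by (cases l) (auto simp: valid_letter_def dest: gamma_idem_index_cases)

definition parity_idem :: "nat \<Rightarrow> int \<Rightarrow> 'k free_alg" where
  "parity_idem k L = (if even L then 1 - lt (U k) else lt (U k))"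

lemma parity_idem_Rfree: "idem_index k \<Longrightarrow> parity_idem k L \<in> RF"
  unfolding parity_idem_def idem_index_def by (auto intro!: Rfree_diff Rfree_one Rfree_lt)

lemma parity_idem_Fset: "idem_index k \<Longrightarrow> parity_idem k L \<in> FS"
  by (rule Fset_Rfree[OF parity_idem_Rfree])

lemma parity_idem_complement: "parity_idem k (L + 1) + parity_idem k L = 1"
  by (simp add: parity_idem_def)

lemma parity_idem_orthogonal:
  assumes "idem_index k" "odd (L - L')"
  shows "parity_idem k L * parity_idem k L' \<approx> 0"
proof -
  have "lt (U k) - lt (U k) * lt (U k) \<approx> 0"
    using rel_U_idem[OF assms(1)] unfolding cong_J_def by (metis J_uminus diff_zero minus_diff_eq)
  moreover have "parity_idem k L * parity_idem k L' = lt (U k) - lt (U k) * lt (U k)"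
    using assms(2) by (auto simp: parity_idem_def algebra_simps)
  ultimately show ?thesis by simp
qed

text \<open>Since R is commutative modulo J, orthogonal idempotents annihilate each other across any
  product of elements of R.\<close>
lemma parity_idem_kill:
  assumes k: "idem_index k" and "odd (L - L')" and x: "x \<in> RF" and y: "y \<in> RF"
  shows "parity_idem k L * (x * (const c * parity_idem k L') * y) \<in> J"
proof -
  have "parity_idem k L * (x * (const c * parity_idem k L') * y)
      = const c * ((parity_idem k L * x) * parity_idem k L' * y)"
    by (simp add: mult_const_left_commute mult.assoc)
  also have "\<dots> \<approx> const c * ((x * parity_idem k L) * parity_idem k L' * y)"
    using k x y by (intro cong_J_const_mult cong_J_mult_right Rfree_commute parity_idem_Rfree Fset_Rfree Rfree_mult)
  also have "\<dots> = const c * (x * (parity_idem k L * parity_idem k L') * y)"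
    by (simp add: mult.assoc)
  also have "\<dots> \<approx> const c * (x * 0 * y)"
    using parity_idem_orthogonal[OF k \<open>odd (L - L')\<close>] x y
    by (intro cong_J_const_mult cong_J_mult_right cong_J_mult_left Fset_Rfree)
  finally show ?thesis
    by (simp add: mem_J_iff_cong_J_0)
qed

lemma sigma_parity_idem:
  assumes "idem_index k" "1 \<le> i" "i \<le> m"
  shows "sigma p q eps \<gamma> i (parity_idem k L) = parity_idem k (L + \<gamma> k i)"
  using gamma_idem_index_cases[OF assms] sigma_idem_index[OF assms]
  by (auto simp: parity_idem_def alg_endo_diff[OF alg_endo_sigma] alg_endo_one[OF alg_endo_sigma])

lemma sigma_inv_parity_idem:
  assumes "idem_index k" "1 \<le> i" "i \<le> m"
  shows "sigma_inv p q eps \<gamma> i (parity_idem k L) = parity_idem k (L - \<gamma> k i)"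
  using gamma_idem_index_cases[OF assms] sigma_inv_idem_index[OF assms]
  by (auto simp: parity_idem_def alg_endo_diff[OF alg_endo_sigma_inv] alg_endo_one[OF alg_endo_sigma_inv])

lemma parity_idem_lt:
  assumes k: "idem_index k" and l: "valid_letter (p+q) m l"
  shows "parity_idem k L * lt l \<approx> lt l * parity_idem k (L - step k l)"
proof (cases l)
  case (U j)
  with k l show ?thesis
    by (auto intro!: Rfree_commute parity_idem_Rfree Rfree_lt simp: valid_letter_def)
next
  case (X i)
  with l have i: "1 \<le> i" "i \<le> m" by (auto simp: valid_letter_def)
  have "lt (X i) * parity_idem k (L - \<gamma> k i) \<approx> sigma p q eps \<gamma> i (parity_idem k (L - \<gamma> k i)) * lt (X i)"
    using i k by (intro rel_X_Rfree parity_idem_Rfree)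
  then show ?thesis
    using X sigma_parity_idem[OF k i] by (auto intro: cong_J_sym)
next
  case (Y i)
  with l have i: "1 \<le> i" "i \<le> m" by (auto simp: valid_letter_def)
  have "lt (Y i) * parity_idem k (L + \<gamma> k i) \<approx> sigma_inv p q eps \<gamma> i (parity_idem k (L + \<gamma> k i)) * lt (Y i)"
    using i k by (intro rel_Y_Rfree parity_idem_Rfree)
  then show ?thesis
    using Y sigma_inv_parity_idem[OF k i] by (auto intro: cong_J_sym)
qed

lemma parity_idem_wmon:
  "idem_index k \<Longrightarrow> valid_word xs \<Longrightarrow> parity_idem k L * wmon xs \<approx> wmon xs * parity_idem k (L - level k xs)"
proof (induction xs arbitrary: L)
  case (Cons l xs)
  have "parity_idem k L * wmon (l # xs) = (parity_idem k L * lt l) * wmon xs"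
    by (simp add: wmon_Cons mult.assoc)
  also have "\<dots> \<approx> (lt l * parity_idem k (L - step k l)) * wmon xs"
    using Cons.prems by (intro cong_J_mult_right parity_idem_lt Fset_wmon) auto
  also have "\<dots> = lt l * (parity_idem k (L - step k l) * wmon xs)"
    by (simp add: mult.assoc)
  also have "\<dots> \<approx> lt l * (wmon xs * parity_idem k (L - step k l - level k xs))"
    using Cons by (intro cong_J_mult_left Fset_lt) auto
  also have "\<dots> = wmon (l # xs) * parity_idem k (L - level k (l # xs))"
    by (simp add: wmon_Cons mult.assoc algebra_simps)
  finally show ?case .
qed auto

lemma u_fac_idem_index:
  "\<gamma> k a = 1 \<or> \<gamma> k a = -1 \<Longrightarrow>
   u_fac \<gamma> k a = const (of_int (\<gamma> k a)) * parity_idem k (min 0 (\<gamma> k a) + 1)"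
  by (auto simp: u_fac_def parity_idem_def const_uminus)

lemma tt_factor:
  assumes "1 \<le> k" "k \<le> p+q"
  obtains P1 P2 where "P1 \<in> RF" "P2 \<in> RF" "tt (p+q) \<gamma> a = P1 * u_fac \<gamma> k a * P2"
proof -
  have "[1..<p+q+1] = [1..<k] @ k # [Suc k..<p+q+1]"
    using assms upt_add_eq_append[of 1 k "p+q+1-k"] by (simp add: upt_conv_Cons)
  then have "tt (p+q) \<gamma> a = prod_list (map (\<lambda>j. u_fac \<gamma> j a) [1..<k]) * u_fac \<gamma> k a
                          * prod_list (map (\<lambda>j. u_fac \<gamma> j a) [Suc k..<p+q+1])"
    by (simp add: tt_def mult.assoc)
  moreover have "prod_list (map (\<lambda>j. u_fac \<gamma> j a) [1..<k]) \<in> RF"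
    "prod_list (map (\<lambda>j. u_fac \<gamma> j a) [Suc k..<p+q+1]) \<in> RF"
    using assms by (auto simp del: upt_Suc intro!: Rfree_prod_list u_fac_Rfree)
  ultimately show ?thesis
    using that by blast
qed

text \<open>A factor \<open>u\<^sub>k\<close> or \<open>u\<^sub>k - 1\<close> of \<open>t\<^sub>a\<close> is what kills a matched pair; the relevant
  idempotent is the one belonging to the edge the pair crosses.\<close>
lemma matched_pair_kill:
  assumes k: "idem_index k" and mt: "matched l1 l2" and v: "valid_letter (p+q) m l1"
    and s: "step k l1 \<noteq> 0"
  shows "parity_idem k (min 0 (step k l1) + 1) * wmon [l1, l2] \<in> J"
proof -
  define a where "a = idx l1"
  have cases: "(l1 = X a \<and> l2 = Y a) \<or> (l1 = Y a \<and> l2 = X a)"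
    using matched_cases[OF mt] by (auto simp: a_def)
  then have a: "1 \<le> a" "a \<le> m" using v by (auto simp: valid_letter_def)
  have g: "\<gamma> k a = 1 \<or> \<gamma> k a = -1"
    using gamma_idem_index_cases[OF k a] cases s by auto
  obtain P1 P2 where P: "P1 \<in> RF" "P2 \<in> RF" "tt (p+q) \<gamma> a = P1 * u_fac \<gamma> k a * P2"
    using tt_factor k unfolding idem_index_def by blast
  let ?c = "const (of_int (\<gamma> k a)) :: 'k free_alg"
  let ?e = "parity_idem k (min 0 (step k l1) + 1)"
  let ?\<sigma> = "sigma p q eps \<gamma> a :: 'k free_alg \<Rightarrow> _"
  consider "l1 = X a" "l2 = Y a" | "l1 = Y a" "l2 = X a" using cases by blast
  then show ?thesis
  proof cases
    case 1
    have "?e * wmon [l1, l2] \<approx> ?e * ?\<sigma> (tt (p+q) \<gamma> a)"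
      using rel_X_Y[OF a] k 1 by (intro cong_J_mult_left parity_idem_Fset) (simp_all add: wmon_Cons)
    also have "?\<sigma> (tt (p+q) \<gamma> a) = ?\<sigma> P1 * (?c * parity_idem k (min 0 (\<gamma> k a) + 1 + \<gamma> k a)) * ?\<sigma> P2"
      using P(3) g sigma_parity_idem[OF k a]
      by (simp add: alg_endo_mult[OF alg_endo_sigma] u_fac_idem_index alg_endo_def[THEN iffD1, OF alg_endo_sigma])
    finally have "?e * wmon [l1, l2] \<approx> ?e * (?\<sigma> P1 * (?c * parity_idem k (min 0 (\<gamma> k a) + 1 + \<gamma> k a)) * ?\<sigma> P2)" .
    moreover have "odd (min 0 (step k l1) + 1 - (min 0 (\<gamma> k a) + 1 + \<gamma> k a))"
      using g 1 by auto
    then have "?e * (?\<sigma> P1 * (?c * parity_idem k (min 0 (\<gamma> k a) + 1 + \<gamma> k a)) * ?\<sigma> P2) \<in> J"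
      using P by (intro parity_idem_kill[OF k] sigma_Rfree)
    ultimately show ?thesis
      by (rule cong_J_mem_J)
  next
    case 2
    have "?e * wmon [l1, l2] \<approx> ?e * tt (p+q) \<gamma> a"
      using rel_Y_X[OF a] k 2 by (intro cong_J_mult_left parity_idem_Fset) (simp_all add: wmon_Cons)
    moreover have "odd (min 0 (step k l1) + 1 - (min 0 (\<gamma> k a) + 1))"
      using g 2 by auto
    then have "?e * tt (p+q) \<gamma> a \<in> J"
      using P parity_idem_kill[OF k] by (simp add: u_fac_idem_index[OF g])
    ultimately show ?thesis
      by (rule cong_J_mem_J)
  qed
qed

definition crossings_killed :: "letter list \<Rightarrow> bool" where
  "crossings_killed v \<longleftrightarrow>
     (\<forall>k. idem_index k \<longrightarrow> (\<forall>L\<in>crossings k 0 v. parity_idem k (L + 1) * wmon v \<in> J))"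

lemma crossings_killed_if_in_J: "valid_word v \<Longrightarrow> wmon v \<in> J \<Longrightarrow> crossings_killed v"
  by (auto simp: crossings_killed_def intro: J_mult_left parity_idem_Fset)

lemma in_J_if_adjacent_crossings:
  assumes "crossings_killed v" "idem_index k" "L \<in> crossings k 0 v" "L + 1 \<in> crossings k 0 v"
  shows "wmon v \<in> J"
proof -
  have "parity_idem k (L + 1 + 1) * wmon v + parity_idem k (L + 1) * wmon v \<in> J"
    using assms unfolding crossings_killed_def by (blast intro: J_add)
  then show ?thesis
    by (simp only: parity_idem_complement mult_1 flip: distrib_right)
qed

lemma crossings_killed_transfer:
  assumes "wmon v \<approx> r * wmon w" "r \<in> RF" "crossings_killed w" "idem_index k" "L \<in> crossings k 0 w"
    "valid_word w"
  shows "parity_idem k (L + 1) * wmon v \<in> J"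
proof -
  have "parity_idem k (L + 1) * wmon v \<approx> parity_idem k (L + 1) * (r * wmon w)"
    using assms by (intro cong_J_mult_left parity_idem_Fset)
  also have "\<dots> = (parity_idem k (L + 1) * r) * wmon w"
    by (simp add: mult.assoc)
  also have "\<dots> \<approx> (r * parity_idem k (L + 1)) * wmon w"
    using assms by (intro cong_J_mult_right Rfree_commute parity_idem_Rfree Fset_wmon)
  also have "\<dots> = r * (parity_idem k (L + 1) * wmon w)"
    by (simp add: mult.assoc)
  finally show ?thesis
    using assms by (elim cong_J_mem_J) (auto simp: crossings_killed_def intro: J_mult_left Fset_Rfree)
qed

lemma crossings_pair_commute:
  assumes "step k x \<in> {-1,0,1}" "step k y \<in> {-1,0,1}" "step k x * step k y \<ge> 0"
  shows "crossings k A [x, y] = crossings k A [y, x]"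
  using assms by (auto simp: mult_less_0_iff)

lemma crossings_pair_adjacent:
  assumes "step k x = step k y" "step k x = 1 \<or> step k x = -1"
  shows "\<exists>L. L \<in> crossings k A [y, x] \<and> L + 1 \<in> crossings k A [y, x]"
  using assms by (auto intro: exI[of _ A] exI[of _ "A - 2"])

text \<open>This is where condition (ii) enters: a commuting swap of \<open>X\<^sub>b\<close> and \<open>Y\<^sub>d\<close> either leaves every
  crossing set unchanged, or \<open>\<gamma>\<^sub>k\<^sub>b \<gamma>\<^sub>k\<^sub>d < 0\<close> for an idempotent index k and then the swapped word
  crosses two adjacent edges.\<close>
lemma commuting_swap_crossings:
  assumes v: "valid_word v" and sw: "commuting_swap v w"
  shows "(\<exists>k L. idem_index k \<and> L \<in> crossings k 0 w \<and> L + 1 \<in> crossings k 0 w) \<or>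
         (\<forall>k. idem_index k \<longrightarrow> crossings k 0 v = crossings k 0 w)"
proof -
  obtain \<alpha> \<beta> x y where vw: "v = \<alpha> @ [x, y] @ \<beta>" "w = \<alpha> @ [y, x] @ \<beta>" "opposite x y" "idx x \<noteq> idx y"
    using sw unfolding commuting_swap_def by blast
  obtain b d where bd: "{x, y} = {X b, Y d}" "b \<noteq> d"
    using vw(3,4) by (cases x; cases y) (auto simp: opposite_def)
  have bd_range: "1 \<le> b" "b \<le> m" "1 \<le> d" "d \<le> m"
    using v vw(1) bd by (auto simp: valid_letter_def doubleton_eq_iff)
  have steps: "{step k x, step k y} = {\<gamma> k b, - \<gamma> k d}" for k
    using bd by (auto simp: doubleton_eq_iff)
  have gb: "\<gamma> k b \<in> {-1,0,1}" "\<gamma> k d \<in> {-1,0,1}" if "idem_index k" for k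
    using gamma_idem_index_cases[OF that] bd_range by auto
  have crossings_split: "crossings k 0 (\<alpha> @ [x', y'] @ \<beta>)
      = crossings k 0 \<alpha> \<union> crossings k (level k \<alpha>) [x', y'] \<union> crossings k (level k \<alpha> + step k x' + step k y') \<beta>"
    for k x' y'
    by (simp add: crossings_append Un_assoc)
  consider (opposite_signs) k where "idem_index k" "\<gamma> k b * \<gamma> k d < 0"
    | (same_signs) "\<forall>k. 1 \<le> k \<and> k \<le> p+q \<longrightarrow> \<gamma> k b * \<gamma> k d \<le> 0"
    using gamma_ok bd_range bd(2) unfolding gamma_ok_def idem_index_def by blast
  then show ?thesis
  proof cases
    case opposite_signs
    then have "step k x = step k y \<and> (step k x = 1 \<or> step k x = -1)"
      using steps[of k] gb[OF opposite_signs(1)] by (auto simp: doubleton_eq_iff)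
    then obtain L where "L \<in> crossings k (level k \<alpha>) [y, x]" "L + 1 \<in> crossings k (level k \<alpha>) [y, x]"
      using crossings_pair_adjacent by blast
    then show ?thesis
      using opposite_signs(1) vw(2) crossings_split[of k y x] by blast
  next
    case same_signs
    have "crossings k 0 v = crossings k 0 w" if k: "idem_index k" for k
    proof -
      have "\<gamma> k b * \<gamma> k d \<le> 0" using same_signs k by (auto simp: idem_index_def)
      then have "crossings k (level k \<alpha>) [x, y] = crossings k (level k \<alpha>) [y, x]"
        using steps[of k] gb[OF k] by (intro crossings_pair_commute) (auto simp: doubleton_eq_iff)
      then show ?thesis
        using vw(1,2) crossings_split[of k x y] crossings_split[of k y x] by (simp add: ac_simps)
    qed
    then show ?thesis by blast
  qed
qed

lemma wmon_commuting_swap: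
  assumes "valid_word v" "commuting_swap v w"
  obtains c where "wmon v \<approx> const c * wmon w"
proof -
  obtain \<alpha> \<beta> x y where vw: "v = \<alpha> @ [x, y] @ \<beta>" "w = \<alpha> @ [y, x] @ \<beta>" "opposite x y" "idx x \<noteq> idx y"
    using assms(2) unfolding commuting_swap_def by blast
  have valid: "valid_letter (p+q) m x" "valid_letter (p+q) m y" "valid_word \<alpha>" "valid_word \<beta>"
    using assms(1) vw(1) by auto
  obtain c where c: "wmon [x, y] \<approx> const c * wmon [y, x]"
  proof -
    consider i j where "x = X i" "y = Y j" | i j where "x = Y j" "y = X i"
      using vw(3) by (cases x; cases y) (auto simp: opposite_def)
    then show ?thesis
    proof cases
      case 1 then show ?thesis
        using rel_X_Y_swap[of i j] valid vw(4) that by (auto simp: valid_letter_def wmon_Cons mult.assoc)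
    next
      case 2 then show ?thesis
        using rel_Y_X_swap[of i j] valid vw(4) that by (auto simp: valid_letter_def wmon_Cons mult.assoc)
    qed
  qed
  have "wmon v = wmon \<alpha> * (wmon [x, y] * wmon \<beta>)"
    by (simp only: vw(1) wmon_append)
  also have "\<dots> \<approx> wmon \<alpha> * ((const c * wmon [y, x]) * wmon \<beta>)"
    using c valid by (intro cong_J_mult_left cong_J_mult_right Fset_wmon)
  also have "\<dots> = const c * wmon w"
    by (simp only: vw(2) wmon_append mult_const_left_commute mult.assoc)
  finally show ?thesis by (rule that)
qed

lemma crossings_killed_commuting_swap:
  assumes v: "valid_word v" and sw: "commuting_swap v w" and w: "crossings_killed w"
  shows "crossings_killed v"
proof -
  obtain c where c: "wmon v \<approx> const c * wmon w"
    using wmon_commuting_swap[OF v sw] .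
  have "valid_word w"
    using v sw by (auto simp: commuting_swap_def)
  from commuting_swap_crossings[OF v sw] show ?thesis
  proof
    assume "\<exists>k L. idem_index k \<and> L \<in> crossings k 0 w \<and> L + 1 \<in> crossings k 0 w"
    then have "wmon w \<in> J"
      using in_J_if_adjacent_crossings[OF w] by blast
    then show ?thesis
      using c v by (intro crossings_killed_if_in_J) (auto elim: cong_J_mem_J intro: J_const_mult)
  next
    assume same: "\<forall>k. idem_index k \<longrightarrow> crossings k 0 v = crossings k 0 w"
    show ?thesis
      unfolding crossings_killed_def
    proof (intro allI impI ballI)
      fix k L assume k: "idem_index k" and L: "L \<in> crossings k 0 v"
      have "parity_idem k (L + 1) * wmon v \<approx> const c * (parity_idem k (L + 1) * wmon w)"
        using cong_J_mult_left[OF c parity_idem_Fset[OF k]] by (simp add: mult_const_left_commute)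
      moreover have "parity_idem k (L + 1) * wmon w \<in> J"
        using w k L same unfolding crossings_killed_def by blast
      ultimately show "parity_idem k (L + 1) * wmon v \<in> J"
        by (blast intro: cong_J_mem_J J_const_mult)
    qed
  qed
qed

lemma crossings_killed_commuting_swaps:
  "commuting_swap\<^sup>*\<^sup>* v w \<Longrightarrow> valid_word v \<Longrightarrow> crossings_killed w \<Longrightarrow> crossings_killed v"
proof (induction rule: converse_rtranclp_induct)
  case (step v v')
  moreover have "valid_word v'"
    using step by (auto simp: commuting_swap_def)
  ultimately show ?case
    using crossings_killed_commuting_swap by blast
qed

lemma crossings_shift: "crossings k A u = (\<lambda>L. A + L) ` crossings k 0 u"
proof (induction u arbitrary: A)
  case (Cons x u)
  show ?case
    using Cons[of "A + step k x"] Cons[of "step k x"] by (auto simp: image_image add.assoc)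
qed simp

lemma wmon_insert_Rfree:
  assumes "valid_word \<alpha>" "valid_word \<beta>" "wmon u \<approx> \<rho>" "\<rho> \<in> RF"
  obtains r where "r \<in> RF" "wmon (\<alpha> @ u @ \<beta>) \<approx> r * wmon (\<alpha> @ \<beta>)"
proof -
  obtain r where r: "r \<in> RF" "wmon \<alpha> * \<rho> \<approx> r * wmon \<alpha>"
    using wmon_Rfree_transport[OF assms(1,4)] by blast
  have "wmon (\<alpha> @ u @ \<beta>) = wmon \<alpha> * wmon u * wmon \<beta>"
    by (simp only: wmon_append mult.assoc)
  also have "\<dots> \<approx> wmon \<alpha> * \<rho> * wmon \<beta>"
    using assms by (intro cong_J_mult_right cong_J_mult_left Fset_wmon)
  also have "\<dots> \<approx> r * wmon \<alpha> * wmon \<beta>"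
    using r assms by (intro cong_J_mult_right Fset_wmon)
  also have "\<dots> = r * wmon (\<alpha> @ \<beta>)"
    by (simp add: wmon_append mult.assoc)
  finally show ?thesis
    using r(1) that by blast
qed

lemma crossings_killed_insert:
  assumes valid: "valid_word (\<alpha> @ u @ \<beta>)" and u: "wmon u \<approx> \<rho>" "\<rho> \<in> RF" "crossings_killed u"
    and level_u: "\<And>k. idem_index k \<Longrightarrow> level k u = 0"
    and killed: "crossings_killed (\<alpha> @ \<beta>)"
  shows "crossings_killed (\<alpha> @ u @ \<beta>)"
  unfolding crossings_killed_def
proof (intro allI impI ballI)
  fix k L assume k: "idem_index k" and L: "L \<in> crossings k 0 (\<alpha> @ u @ \<beta>)"
  have valid': "valid_word \<alpha>" "valid_word u" "valid_word \<beta>" "valid_word (\<alpha> @ \<beta>)"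
    using valid by auto
  obtain r where r: "r \<in> RF" "wmon (\<alpha> @ u @ \<beta>) \<approx> r * wmon (\<alpha> @ \<beta>)"
    using wmon_insert_Rfree[OF valid'(1,3) u(1,2)] by blast
  have "L \<in> crossings k 0 (\<alpha> @ \<beta>) \<or> L \<in> crossings k (level k \<alpha>) u"
    using L level_u[OF k] by (auto simp: crossings_append)
  then show "parity_idem k (L + 1) * wmon (\<alpha> @ u @ \<beta>) \<in> J"
  proof
    assume "L \<in> crossings k 0 (\<alpha> @ \<beta>)"
    then show ?thesis
      using crossings_killed_transfer[OF r(2,1) killed k _ valid'(4)] by blast
  next
    assume "L \<in> crossings k (level k \<alpha>) u"
    then obtain L0 where L0: "L0 \<in> crossings k 0 u" "L = level k \<alpha> + L0"
      unfolding crossings_shift[of k "level k \<alpha>"] by blast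
    have "parity_idem k (L + 1) * wmon (\<alpha> @ u @ \<beta>) = (parity_idem k (L + 1) * wmon \<alpha>) * wmon u * wmon \<beta>"
      by (simp only: wmon_append mult.assoc)
    also have "\<dots> \<approx> (wmon \<alpha> * parity_idem k (L0 + 1)) * wmon u * wmon \<beta>"
      using parity_idem_wmon[OF k valid'(1), of "L + 1"] L0(2) valid'
      by (intro cong_J_mult_right Fset_wmon) (simp_all add: algebra_simps)
    also have "\<dots> = wmon \<alpha> * (parity_idem k (L0 + 1) * wmon u) * wmon \<beta>"
      by (simp add: mult.assoc)
    finally show ?thesis
      using u(3) k L0(1) valid' unfolding crossings_killed_def
      by (elim cong_J_mem_J) (blast intro: J_mult_left J_mult_right Fset_wmon)
  qed
qed

lemma crossings_killed_insert_U:
  "valid_word (\<alpha> @ [U c] @ \<beta>) \<Longrightarrow> crossings_killed (\<alpha> @ \<beta>) \<Longrightarrow> crossings_killed (\<alpha> @ [U c] @ \<beta>)"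
  by (rule crossings_killed_insert[where \<rho> = "lt (U c)"])
     (auto simp: crossings_killed_def wmon_Cons valid_letter_def intro: Rfree_lt)

lemma crossings_killed_insert_matched:
  assumes valid: "valid_word (\<alpha> @ [l1, l2] @ \<beta>)" and mt: "matched l1 l2"
    and killed: "crossings_killed (\<alpha> @ \<beta>)"
  shows "crossings_killed (\<alpha> @ [l1, l2] @ \<beta>)"
proof -
  define a where "a = idx l1"
  have cases: "(l1 = X a \<and> l2 = Y a) \<or> (l1 = Y a \<and> l2 = X a)"
    using matched_cases[OF mt] by (auto simp: a_def)
  then have a: "1 \<le> a" "a \<le> m"
    using valid by (auto simp: valid_letter_def)
  obtain \<rho> where \<rho>: "wmon [l1, l2] \<approx> \<rho>" "\<rho> \<in> RF"
    using cases rel_Y_X[OF a] rel_X_Y[OF a] tt_Rfree sigma_Rfree by (auto simp: wmon_Cons)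
  have level: "level k [l1, l2] = 0" for k
    using cases by auto
  have "crossings_killed [l1, l2]"
    unfolding crossings_killed_def
  proof (intro allI impI ballI)
    fix k L assume k: "idem_index k" and L: "L \<in> crossings k 0 [l1, l2]"
    then have "step k l1 \<noteq> 0" "L = min 0 (step k l1)"
      using level[of k] by (auto split: if_splits)
    then show "parity_idem k (L + 1) * wmon [l1, l2] \<in> J"
      using matched_pair_kill[OF k mt] valid by simp
  qed
  then show ?thesis
    using crossings_killed_insert[OF valid \<rho>] level killed by blast
qed

lemma crossings_killed_if_degree_zero:
  "valid_word v \<Longrightarrow> degree_zero v \<Longrightarrow> crossings_killed v"
proof (induction "length v" arbitrary: v rule: less_induct)
  case less
  show ?case
  proof (cases "\<exists>c. U c \<in> set v")
    case True
    then obtain c \<alpha> \<beta> where v: "v = \<alpha> @ [U c] @ \<beta>"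
      by (metis append_Cons append_Nil split_list)
    have "crossings_killed (\<alpha> @ \<beta>)"
      using less.prems v by (intro less.hyps) (auto simp: degree_zero_def)
    then show ?thesis
      using crossings_killed_insert_U less.prems v by blast
  next
    case False
    then have XY: "\<forall>x\<in>set v. isX x \<or> isY x"
      by (metis isX.simps(1) isY.simps(1) letter.exhaust)
    show ?thesis
    proof (cases "v = []")
      case True then show ?thesis by (simp add: crossings_killed_def)
    next
      case False
      obtain \<alpha> l1 l2 \<beta> where sw: "commuting_swap\<^sup>*\<^sup>* v (\<alpha> @ [l1, l2] @ \<beta>)" and mt: "matched l1 l2"
        and set: "set (\<alpha> @ [l1, l2] @ \<beta>) = set v" and reduced: "degree_zero (\<alpha> @ \<beta>)" "length (\<alpha> @ \<beta>) < length v"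
        using degree_zero_matched_reduction[OF XY False less.prems(2)] by blast
      have valid: "valid_word (\<alpha> @ [l1, l2] @ \<beta>)"
        using less.prems(1) set by blast
      then have "crossings_killed (\<alpha> @ \<beta>)"
        using reduced by (intro less.hyps) auto
      then have "crossings_killed (\<alpha> @ [l1, l2] @ \<beta>)"
        by (rule crossings_killed_insert_matched[OF valid mt])
      then show ?thesis
        using crossings_killed_commuting_swaps[OF sw less.prems(1)] by blast
    qed
  qed
qed

lemma crossings_interval:
  assumes "idem_index k" "valid_word ys" "min A (A + level k ys) \<le> L" "L < max A (A + level k ys)"
  shows "L \<in> crossings k A ys"
  using assms(2-4)
proof (induction ys arbitrary: A)
  case (Cons x xs)
  have s: "step k x = 0 \<or> step k x = 1 \<or> step k x = -1"
    using step_idem_index_cases[OF assms(1)] Cons.prems by auto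
  show ?case
  proof (cases "min (A + step k x) (A + step k x + level k xs) \<le> L \<and> L < max (A + step k x) (A + step k x + level k xs)")
    case True
    then show ?thesis using Cons by simp
  next
    case False
    with Cons.prems s show ?thesis by auto
  qed
qed simp

text \<open>A subword of level at least 2 in absolute value makes the path cross two adjacent edges.\<close>
lemma bad_word_in_J:
  assumes "valid_word (x @ y @ z)" "degree_zero (x @ y @ z)" "idem_index k" "\<bar>level k y\<bar> \<ge> 2"
  shows "wmon (x @ y @ z) \<in> J"
proof -
  let ?L = "min (level k x) (level k x + level k y)"
  have "?L \<in> crossings k (level k x) y" "?L + 1 \<in> crossings k (level k x) y"
    using assms by (auto intro!: crossings_interval)
  then have "?L \<in> crossings k 0 (x @ y @ z)" "?L + 1 \<in> crossings k 0 (x @ y @ z)"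
    by (auto simp: crossings_append)
  then show ?thesis
    using in_J_if_adjacent_crossings[OF crossings_killed_if_degree_zero[OF assms(1,2)] assms(3)] by blast
qed

section \<open>The bad ideal and the support\<close>

lemma rels_homog:
  assumes "(s :: 'k free_alg) \<in> rels p q m eps \<gamma>" shows "\<exists>h. homog h s"
proof -
  have R: "homog (\<lambda>k. 0) r" if "r \<in> RF" for r
    using homog_Rfree that by blast
  have U: "homog (\<lambda>k. 0) (lt (U j) :: 'k free_alg)" for j
    using homog_lt[of "U j"] by simp
  have XY_swap: "homog (\<lambda>k. ldeg (X i) k + ldeg (Y j) k) (const c * lt (Y j) * lt (X i) :: 'k free_alg)" for i j c
  proof -
    have "homog (ldeg (Y j)) (const c * lt (Y j) :: 'k free_alg)"
      by (rule homog_mult_zero_left[OF homog_const homog_lt])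
    then have "homog (\<lambda>k. ldeg (Y j) k + ldeg (X i) k) (const c * lt (Y j) * lt (X i))"
      by (rule homog_mult[OF _ homog_lt])
    then show ?thesis
      by (simp add: add.commute)
  qed
  have gen_U: "\<exists>h. homog h (lt (U a) * lt (U b) - lt (U b) * lt (U a) :: 'k free_alg)" for a b
    using homog_diff[OF homog_mult_zero_left[OF U U] homog_mult_zero_left[OF U U]] by blast
  have gen_idem: "\<exists>h. homog h (lt (U j) * lt (U j) - lt (U j) :: 'k free_alg)" for j
    using homog_diff[OF homog_mult_zero_left[OF U U] U] by blast
  have gen_X: "\<exists>h. homog h (lt (X i) * r - sigma p q eps \<gamma> i r * lt (X i))" if "r \<in> RF" for i r
    using homog_diff[OF homog_mult_zero_right[OF homog_lt R] homog_mult_zero_left[OF R homog_lt]] that sigma_Rfree by blast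
  have gen_Y: "\<exists>h. homog h (lt (Y i) * r - sigma_inv p q eps \<gamma> i r * lt (Y i))" if "r \<in> RF" for i r
    using homog_diff[OF homog_mult_zero_right[OF homog_lt R] homog_mult_zero_left[OF R homog_lt]] that sigma_inv_Rfree by blast
  have gen_YX: "\<exists>h. homog h (lt (Y i) * lt (X i) - tt (p+q) \<gamma> i :: 'k free_alg)" for i
    using homog_diff[OF homog_Y_X R[OF tt_Rfree]] by blast
  have gen_XY: "\<exists>h. homog h (lt (X i) * lt (Y i) - sigma p q eps \<gamma> i (tt (p+q) \<gamma> i) :: 'k free_alg)" for i
    using homog_diff[OF homog_X_Y R[OF sigma_Rfree[OF tt_Rfree]]] by blast
  have gen_swap: "\<exists>h. homog h (lt (X i) * lt (Y j) - const c * lt (Y j) * lt (X i) :: 'k free_alg)" for i j c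
    using homog_diff[OF homog_mult[OF homog_lt homog_lt] XY_swap] by blast
  from assms show ?thesis
    unfolding rels_def
    by (elim UnE CollectE exE conjE) (simp_all add: gen_U gen_idem gen_X gen_Y gen_YX gen_XY gen_swap)
qed

lemma J_graded: "a \<in> J \<Longrightarrow> component g a \<in> J"
  unfolding Jrel_def by (rule ideal_gen_graded[OF rels_homog])

definition bad_words :: "letter word set" where
  "bad_words = {w. valid_word (word_list w) \<and>
     (\<exists>x y z k. word_list w = x @ y @ z \<and> idem_index k \<and> \<bar>level k y\<bar> \<ge> 2)}"

definition bad_ideal :: "'k free_alg set" where
  "bad_ideal = {a. a \<in> FS \<and> (\<exists>b c. b \<in> J \<and> a = b + c \<and> Poly_Mapping.keys c \<subseteq> bad_words)}"

lemma bad_words_extend: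
  assumes "valid_word u" "w \<in> bad_words"
  shows "Word (u @ word_list w) \<in> bad_words" "Word (word_list w @ u) \<in> bad_words"
proof -
  obtain x y z k where w: "word_list w = x @ y @ z" "idem_index k" "\<bar>level k y\<bar> \<ge> 2"
    "valid_word (word_list w)"
    using assms(2) unfolding bad_words_def by blast
  show "Word (u @ word_list w) \<in> bad_words"
    unfolding bad_words_def using w assms(1)
    by (intro CollectI conjI exI[of _ "u @ x"] exI[of _ y] exI[of _ z] exI[of _ k]) auto
  show "Word (word_list w @ u) \<in> bad_words"
    unfolding bad_words_def using w assms(1)
    by (intro CollectI conjI exI[of _ x] exI[of _ y] exI[of _ "z @ u"] exI[of _ k]) auto
qed

lemma keys_mult_bad_words:
  assumes "x \<in> FS" "Poly_Mapping.keys c \<subseteq> bad_words"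
  shows "Poly_Mapping.keys (x * c) \<subseteq> bad_words" "Poly_Mapping.keys (c * x) \<subseteq> bad_words"
proof -
  have "v + w \<in> bad_words" "w + v \<in> bad_words" if "v \<in> Poly_Mapping.keys x" "w \<in> bad_words" for v w
  proof -
    have "valid_word (word_list v)" using that(1) assms(1) by (auto simp: Fset_def)
    then show "v + w \<in> bad_words" "w + v \<in> bad_words"
      using bad_words_extend that(2) by (cases v; simp add: plus_word_def)+
  qed
  then show "Poly_Mapping.keys (x * c) \<subseteq> bad_words" "Poly_Mapping.keys (c * x) \<subseteq> bad_words"
    using keys_mult[of x c] keys_mult[of c x] assms(2) by blast+
qed

lemma bad_ideal_is_ideal: "is_ideal (p+q) m bad_ideal"
  unfolding is_ideal_def
proof (intro conjI ballI)
  show "bad_ideal \<subseteq> FS" "0 \<in> bad_ideal"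
    using J_subset_Fset by (auto simp: bad_ideal_def Jrel_def ideal_gen.zero intro!: exI[of _ 0])
  fix a assume "a \<in> bad_ideal"
  then obtain b c where a: "a \<in> FS" "b \<in> J" "a = b + c" "Poly_Mapping.keys c \<subseteq> bad_words"
    by (auto simp: bad_ideal_def)
  show "a + a' \<in> bad_ideal" if "a' \<in> bad_ideal" for a'
  proof -
    from \<open>a' \<in> bad_ideal\<close> obtain b' c'
      where a': "a' \<in> FS" "b' \<in> J" "a' = b' + c'" "Poly_Mapping.keys c' \<subseteq> bad_words"
      by (auto simp: bad_ideal_def)
    have "a + a' = (b + b') + (c + c')" using a a' by (simp add: algebra_simps)
    moreover have "Poly_Mapping.keys (c + c') \<subseteq> bad_words" using a a' keys_add[of c c'] by blast
    ultimately show ?thesis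
      using a a' unfolding bad_ideal_def by (blast intro: Fset_add J_add)
  qed
  fix x assume x: "x \<in> FS"
  have "x * a = x * b + x * c" "a * x = b * x + c * x"
    using a by (simp_all add: algebra_simps)
  then show "x * a \<in> bad_ideal" "a * x \<in> bad_ideal"
    using a x keys_mult_bad_words[OF x a(4)] unfolding bad_ideal_def
    by (blast intro: Fset_mult J_mult_left J_mult_right)+
qed

lemma bad_ideal_graded: "graded bad_ideal"
  unfolding graded_def
proof (intro ballI allI)
  fix a g assume "a \<in> bad_ideal"
  then obtain b c where a: "a \<in> FS" "b \<in> J" "a = b + c" "Poly_Mapping.keys c \<subseteq> bad_words"
    by (auto simp: bad_ideal_def)
  have "component g a \<in> FS"
    using a(1) letter_alg_keys_subset[OF _ keys_component] by (auto simp: Fset_eq_letter_alg)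
  moreover have "component g a = component g b + component g c"
    using a(3) by (simp add: component_add)
  ultimately show "component g a \<in> bad_ideal"
    using J_graded[OF a(2)] keys_component[of g c] a(4) unfolding bad_ideal_def by blast
qed

lemma J_subset_bad_ideal: "J \<subseteq> bad_ideal"
  using J_subset_Fset by (force simp: bad_ideal_def)

lemma bad_ideal_degree_zero:
  assumes a: "a \<in> bad_ideal" and h: "homog (\<lambda>k. 0) a"
  shows "a \<in> J"
proof -
  obtain b c where bc: "b \<in> J" "a = b + c" "Poly_Mapping.keys c \<subseteq> bad_words"
    using a by (auto simp: bad_ideal_def)
  have "a = component (\<lambda>k. 0) b + component (\<lambda>k. 0) c"
    using component_homog[OF h] bc(2) by (simp add: component_add)
  moreover have "component (\<lambda>k. 0) c \<in> J"
    unfolding component_def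
  proof (intro J_sum)
    fix w assume w: "w \<in> {w \<in> Poly_Mapping.keys c. wdeg w = (\<lambda>k. 0)}"
    then obtain x y z k where "word_list w = x @ y @ z" "idem_index k" "\<bar>level k y\<bar> \<ge> 2"
      "valid_word (word_list w)"
      using bc(3) by (auto simp: bad_words_def)
    moreover have "degree_zero (word_list w)"
      using w by (simp add: degree_zero_def wdeg_def fun_eq_iff)
    ultimately have "wmon (word_list w) \<in> J"
      using bad_word_in_J by metis
    then show "Poly_Mapping.single w (Poly_Mapping.lookup c w) \<in> J"
      using J_const_mult by (fastforce simp: wmon_def const_mult_single)
  qed
  ultimately show ?thesis
    using J_graded[OF bc(1)] by (simp add: J_add)
qed

lemma bad_ideal_subset_Imax: "bad_ideal \<subseteq> Imax p q m eps \<gamma>"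
  unfolding Imax_def
  using bad_ideal_is_ideal bad_ideal_graded J_subset_bad_ideal bad_ideal_degree_zero
  by (blast intro: ideal_gen.gen)

lemma level_eq_degree:
  "valid_word xs \<Longrightarrow> level k xs = (\<Sum>i=1..m. \<gamma> k i * (\<Sum>l\<leftarrow>xs. ldeg l i))"
proof (induction xs)
  case (Cons x xs)
  have "(\<Sum>i=1..m. \<gamma> k i * ldeg x i) = step k x"
    using Cons.prems by (cases x) (auto simp: valid_letter_def if_distrib sum.delta cong: if_cong)
  then show ?case
    using Cons by (simp add: distrib_left sum.distrib)
qed simp

lemma support_bound:
  assumes g: "g \<in> tgw_support TYPE('k) p q m eps \<gamma>" and k: "idem_index k"
  shows "\<bar>\<Sum>i=1..m. \<gamma> k i * g i\<bar> \<le> 1"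
proof (rule ccontr)
  assume "\<not> ?thesis"
  then have big: "\<bar>\<Sum>i=1..m. \<gamma> k i * g i\<bar> \<ge> 2" by simp
  obtain a :: "'k free_alg" where a: "a \<in> FS" "homog g a" "a \<notin> Imax p q m eps \<gamma>"
    using g by (auto simp: tgw_support_def)
  have "Poly_Mapping.keys a \<subseteq> bad_words"
  proof
    fix w assume w: "w \<in> Poly_Mapping.keys a"
    have valid: "valid_word (word_list w)" using a(1) w by (auto simp: Fset_def)
    have "wdeg w = g" using a(2) w by (auto simp: homog_def)
    then have "g i = (\<Sum>l\<leftarrow>word_list w. ldeg l i)" for i
      by (auto simp: wdeg_def)
    then have "level k (word_list w) = (\<Sum>i=1..m. \<gamma> k i * g i)"
      using level_eq_degree[OF valid] by simp
    then show "w \<in> bad_words"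
      unfolding bad_words_def using valid k big
      by (intro CollectI conjI exI[of _ "[]"] exI[of _ "word_list w"] exI[of _ "[]"] exI[of _ k]) auto
  qed
  then have "a \<in> bad_ideal"
    using a(1) by (force simp: bad_ideal_def Jrel_def intro: ideal_gen.zero)
  with bad_ideal_subset_Imax a(3) show False by blast
qed

end

theorem mainTheorem7:
  fixes p q m :: nat and eps :: int and \<gamma> :: "nat \<Rightarrow> nat \<Rightarrow> int"
  assumes "eps = 1 \<or> eps = -1"
  assumes "gamma_ok p q m eps \<gamma>"
  shows "\<forall>g\<in>tgw_support TYPE('k::{alg_closed_field, field_char_0}) p q m eps \<gamma>.
           (eps = 1 \<longrightarrow> (\<forall>j. 1 \<le> j \<and> j \<le> p \<longrightarrow> \<bar>\<Sum>i=1..m. \<gamma> j i * g i\<bar> \<le> 1)) \<and>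
           (eps = -1 \<longrightarrow> (\<forall>j. p < j \<and> j \<le> p+q \<longrightarrow> \<bar>\<Sum>i=1..m. \<gamma> j i * g i\<bar> \<le> 1))"
proof -
  interpret tgw "TYPE('k)" p q m eps \<gamma>
    using assms by unfold_locales
  have "idem_index j" if "eps = 1 \<and> 1 \<le> j \<and> j \<le> p \<or> eps = -1 \<and> p < j \<and> j \<le> p+q" for j
    using that by (auto simp: idem_index_def lam_def par_def)
  then show ?thesis
    using support_bound by blast
qed

end
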